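(* Let $G$ be a BDH graph with no universal vertex and let $v\in V(G)$. Then one of the following holds: (1) $\mathbf{H}(G-v)$ has more connected components than $\mathbf{H}(G)$; (2) $\mathbf{H}(G-v)$ is (isomorphic to) an induced subgraph of $\mathbf{H}(G)$; (3) $\mathbf{H}(G-v)$ is (isomorphic to) a contraction of $\mathbf{H}(G)$, i.e., obtained from it by contracting arcs.
   Context: For a bipartite graph $G$ with color classes $X,Y$, a biclique is a vertex set inducing a complete bipartite subgraph, with shores $X(B)=B\cap X$, $Y(B)=B\cap Y$; $\mathcal{B}(G)$ is the set of maximal bicliques ordered by $B\preceq B'\iff X(B)\subseteq X(B')$, and $\mathbf{H}(G)$ is the transitive reduction of $(\mathcal{B}(G),\preceq)$ (arc $(B,B')$ iff $B'$ covers $B$). A graph is distance hereditary if distances in every connected induced subgraph equal distances in the graph; BDH means bipartite distance hereditary (equivalently: bipartite, no induced chordless cycle of length $\ge6$, no induced domino, a domino being $C_6$ plus a chord between antipodal vertices). A universal vertex is adjacent to all vertices of the opposite color class. *)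

theory Defs
  imports Main "HOL-Library.Extended_Nat"
begin

definition bipartite_graph :: "'a set \<Rightarrow> 'a set \<Rightarrow> ('a \<times> 'a) set \<Rightarrow> bool" where
  "bipartite_graph X Y E \<longleftrightarrow> finite X \<and> finite Y \<and> X \<inter> Y = {} \<and> E \<subseteq> X \<times> Y"

definition adj :: "('a \<times> 'a) set \<Rightarrow> 'a \<Rightarrow> 'a \<Rightarrow> bool" where
  "adj E u w \<longleftrightarrow> (u, w) \<in> E \<or> (w, u) \<in> E"

definition is_walk_in :: "('a \<times> 'a) set \<Rightarrow> 'a set \<Rightarrow> 'a list \<Rightarrow> bool" where
  "is_walk_in E S p \<longleftrightarrow> p \<noteq> [] \<and> set p \<subseteq> S \<and>
     (\<forall>i. Suc i < length p \<longrightarrow> adj E (p ! i) (p ! Suc i))"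

text \<open>Distance between u and w in the subgraph induced by S (infinity if no walk).\<close>
definition gdist :: "('a \<times> 'a) set \<Rightarrow> 'a set \<Rightarrow> 'a \<Rightarrow> 'a \<Rightarrow> enat" where
  "gdist E S u w = Inf {enat (length p - 1) | p. is_walk_in E S p \<and> hd p = u \<and> last p = w}"

definition connected_in :: "('a \<times> 'a) set \<Rightarrow> 'a set \<Rightarrow> bool" where
  "connected_in E S \<longleftrightarrow> (\<forall>u\<in>S. \<forall>w\<in>S. \<exists>p. is_walk_in E S p \<and> hd p = u \<and> last p = w)"

definition distance_hereditary :: "'a set \<Rightarrow> ('a \<times> 'a) set \<Rightarrow> bool" where
  "distance_hereditary V E \<longleftrightarrow>
     (\<forall>S \<subseteq> V. connected_in E S \<longrightarrow> (\<forall>u\<in>S. \<forall>w\<in>S. gdist E S u w = gdist E V u w))"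

definition BDH :: "'a set \<Rightarrow> 'a set \<Rightarrow> ('a \<times> 'a) set \<Rightarrow> bool" where
  "BDH X Y E \<longleftrightarrow> bipartite_graph X Y E \<and> distance_hereditary (X \<union> Y) E"

definition has_universal_vertex :: "'a set \<Rightarrow> 'a set \<Rightarrow> ('a \<times> 'a) set \<Rightarrow> bool" where
  "has_universal_vertex X Y E \<longleftrightarrow>
     (\<exists>x\<in>X. \<forall>y\<in>Y. (x, y) \<in> E) \<or> (\<exists>y\<in>Y. \<forall>x\<in>X. (x, y) \<in> E)"

definition del_edges :: "('a \<times> 'a) set \<Rightarrow> 'a \<Rightarrow> ('a \<times> 'a) set" where
  "del_edges E v = {e \<in> E. fst e \<noteq> v \<and> snd e \<noteq> v}"

definition biclique :: "'a set \<Rightarrow> 'a set \<Rightarrow> ('a \<times> 'a) set \<Rightarrow> 'a set \<Rightarrow> bool" where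
  "biclique X Y E B \<longleftrightarrow> B \<subseteq> X \<union> Y \<and> B \<inter> X \<noteq> {} \<and> B \<inter> Y \<noteq> {} \<and>
     (\<forall>x\<in>B \<inter> X. \<forall>y\<in>B \<inter> Y. (x, y) \<in> E)"

definition max_bicliques :: "'a set \<Rightarrow> 'a set \<Rightarrow> ('a \<times> 'a) set \<Rightarrow> 'a set set" where
  "max_bicliques X Y E = {B. biclique X Y E B \<and> \<not> (\<exists>B'. biclique X Y E B' \<and> B \<subset> B')}"

definition bc_le :: "'a set \<Rightarrow> 'a set \<Rightarrow> 'a set \<Rightarrow> bool" where
  "bc_le X B B' \<longleftrightarrow> B \<inter> X \<subseteq> B' \<inter> X"

definition bc_less :: "'a set \<Rightarrow> 'a set \<Rightarrow> 'a set \<Rightarrow> bool" where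
  "bc_less X B B' \<longleftrightarrow> bc_le X B B' \<and> \<not> bc_le X B' B"

type_synonym 'b digraph = "'b set \<times> ('b \<times> 'b) set"

text \<open>H(G): transitive reduction (Hasse diagram) of the poset of maximal bicliques;
  arc (B,B') iff B' covers B.\<close>
definition Hgraph :: "'a set \<Rightarrow> 'a set \<Rightarrow> ('a \<times> 'a) set \<Rightarrow> 'a set digraph" where
  "Hgraph X Y E =
    (max_bicliques X Y E,
     {(B, B'). B \<in> max_bicliques X Y E \<and> B' \<in> max_bicliques X Y E \<and> bc_less X B B' \<and>
        \<not> (\<exists>C\<in>max_bicliques X Y E. bc_less X B C \<and> bc_less X C B')})"

definition conn_rel :: "'b set \<Rightarrow> ('b \<times> 'b) set \<Rightarrow> ('b \<times> 'b) set" where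
  "conn_rel V F = {(u, w). u \<in> V \<and> w \<in> V \<and> (u, w) \<in> ((F \<inter> V \<times> V) \<union> (F \<inter> V \<times> V)\<inverse>)\<^sup>*}"

definition num_components :: "'b digraph \<Rightarrow> nat" where
  "num_components H = card (fst H // conn_rel (fst H) (snd H))"

definition digraph_iso :: "'b digraph \<Rightarrow> 'c digraph \<Rightarrow> bool" where
  "digraph_iso H1 H2 \<longleftrightarrow> (\<exists>f. bij_betw f (fst H1) (fst H2) \<and>
     (\<forall>u\<in>fst H1. \<forall>w\<in>fst H1. (u, w) \<in> snd H1 \<longleftrightarrow> (f u, f w) \<in> snd H2))"

definition iso_induced_subgraph :: "'b digraph \<Rightarrow> 'c digraph \<Rightarrow> bool" where
  "iso_induced_subgraph H1 H2 \<longleftrightarrow> (\<exists>f. inj_on f (fst H1) \<and> f ` fst H1 \<subseteq> fst H2 \<and>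
     (\<forall>u\<in>fst H1. \<forall>w\<in>fst H1. (u, w) \<in> snd H1 \<longleftrightarrow> (f u, f w) \<in> snd H2))"

text \<open>Contracting a sequence of
  arcs one by one yields the same result as contracting the set of them.\<close>
definition contract :: "'b digraph \<Rightarrow> ('b \<times> 'b) set \<Rightarrow> 'b set digraph" where
  "contract H F =
    (let V' = fst H // conn_rel (fst H) F in
     (V', {(C, D). C \<in> V' \<and> D \<in> V' \<and> C \<noteq> D \<and> (\<exists>u\<in>C. \<exists>w\<in>D. (u, w) \<in> snd H)}))"

definition iso_contraction :: "'b digraph \<Rightarrow> 'c digraph \<Rightarrow> bool" where
  "iso_contraction H1 H2 \<longleftrightarrow> (\<exists>F \<subseteq> snd H2. digraph_iso H1 (contract H2 F))"

end

theory Submission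
  imports Defs
begin

text \<open>
  By the symmetry of the two colour classes (which reverses all arcs of \<open>H\<close>) we may
  assume \<open>v \<in> X\<close>. A maximal biclique \<open>q\<close> of \<open>G - v\<close> lifts to the maximal biclique of \<open>G\<close>
  with the same \<open>Y\<close>-shore; lifting is an order embedding, and every maximal biclique of \<open>G\<close>
  outside its image either is the star \<open>c\<^sub>0\<close> of \<open>v\<close> (with \<open>X\<close>-shore \<open>{v}\<close>) or is covered
  in \<open>H(G)\<close> by the lift of its own projection, which differs from it only by \<open>v\<close>.
  If \<open>c\<^sub>0\<close> has no cover, the lifts are all vertices of \<open>H(G)\<close> but \<open>c\<^sub>0\<close>, and \<open>H(G - v)\<close> is
  induced. If \<open>c\<^sub>0\<close> does not exist or has exactly one cover, contracting the arcs from
  the lost bicliques (and from \<open>c\<^sub>0\<close>) yields \<open>H(G - v)\<close>. If \<open>c\<^sub>0\<close> has two covers, distance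
  hereditarity separates their \<open>Y\<close>-shores in \<open>G - v\<close>, so \<open>H(G - v)\<close> has more components.
\<close>

section \<open>Maximal bicliques\<close>

definition common_right_nbrs :: "'a set \<Rightarrow> ('a \<times> 'a) set \<Rightarrow> 'a set \<Rightarrow> 'a set" where
  "common_right_nbrs Y E A = {y \<in> Y. \<forall>x\<in>A. (x, y) \<in> E}"

definition common_left_nbrs :: "'a set \<Rightarrow> ('a \<times> 'a) set \<Rightarrow> 'a set \<Rightarrow> 'a set" where
  "common_left_nbrs X E B = {x \<in> X. \<forall>y\<in>B. (x, y) \<in> E}"

lemma fst_Hgraph: "fst (Hgraph X Y E) = max_bicliques X Y E"
  by (simp add: Hgraph_def)

locale bip_graph =
  fixes X Y :: "'a set" and E :: "('a \<times> 'a) set"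
  assumes bipartite: "bipartite_graph X Y E"
begin

abbreviation "N\<^sub>Y \<equiv> common_right_nbrs Y E"
abbreviation "N\<^sub>X \<equiv> common_left_nbrs X E"
abbreviation "\<B> \<equiv> max_bicliques X Y E"
abbreviation "arcs \<equiv> snd (Hgraph X Y E)"

lemma finite_X: "finite X" and finite_Y: "finite Y"
  and XY_disjoint: "X \<inter> Y = {}" and edges_XY: "E \<subseteq> X \<times> Y"
  using bipartite unfolding bipartite_graph_def by auto

lemma adj_XY: "x \<in> X \<Longrightarrow> adj E x y \<longleftrightarrow> (x, y) \<in> E"
  and adj_YX: "x \<in> X \<Longrightarrow> adj E y x \<longleftrightarrow> (x, y) \<in> E"
  and not_adj_XX: "a \<in> X \<Longrightarrow> b \<in> X \<Longrightarrow> \<not> adj E a b"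
  and not_adj_YY: "a \<in> Y \<Longrightarrow> b \<in> Y \<Longrightarrow> \<not> adj E a b"
  unfolding adj_def using edges_XY XY_disjoint by blast+

lemma N_Y_subset: "N\<^sub>Y A \<subseteq> Y" and N_X_subset: "N\<^sub>X B \<subseteq> X"
  unfolding common_right_nbrs_def common_left_nbrs_def by auto

lemma N_Y_antimono: "A \<subseteq> A' \<Longrightarrow> N\<^sub>Y A' \<subseteq> N\<^sub>Y A"
  and N_X_antimono: "B \<subseteq> B' \<Longrightarrow> N\<^sub>X B' \<subseteq> N\<^sub>X B"
  unfolding common_right_nbrs_def common_left_nbrs_def by auto

lemma subset_N_X_N_Y: "A \<subseteq> X \<Longrightarrow> A \<subseteq> N\<^sub>X (N\<^sub>Y A)"
  and subset_N_Y_N_X: "B \<subseteq> Y \<Longrightarrow> B \<subseteq> N\<^sub>Y (N\<^sub>X B)"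
  unfolding common_right_nbrs_def common_left_nbrs_def by auto

lemma N_Y_N_X_N_Y: "A \<subseteq> X \<Longrightarrow> N\<^sub>Y (N\<^sub>X (N\<^sub>Y A)) = N\<^sub>Y A"
  by (meson subset_N_X_N_Y subset_N_Y_N_X N_Y_antimono N_Y_subset subset_antisym)

lemma biclique_insert_Y:
  assumes "biclique X Y E B" "y \<in> N\<^sub>Y (B \<inter> X)"
  shows "biclique X Y E (insert y B)"
  using assms XY_disjoint unfolding biclique_def common_right_nbrs_def by auto

lemma biclique_insert_X:
  assumes "biclique X Y E B" "x \<in> N\<^sub>X (B \<inter> Y)"
  shows "biclique X Y E (insert x B)"
  using assms XY_disjoint unfolding biclique_def common_left_nbrs_def by auto

lemma closed_biclique_maximal:
  assumes B: "B \<subseteq> X \<union> Y" "B \<inter> X \<noteq> {}" "B \<inter> Y \<noteq> {}"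
    "B \<inter> Y = N\<^sub>Y (B \<inter> X)" "B \<inter> X = N\<^sub>X (B \<inter> Y)"
  shows "B \<in> \<B>"
proof -
  have bc: "biclique X Y E B"
    using B unfolding biclique_def common_right_nbrs_def by blast
  have "\<not> B \<subset> B'" if "biclique X Y E B'" for B'
  proof
    assume sub: "B \<subset> B'"
    have "B' \<inter> Y \<subseteq> N\<^sub>Y (B' \<inter> X)" "B' \<inter> X \<subseteq> N\<^sub>X (B' \<inter> Y)"
      using that unfolding biclique_def common_right_nbrs_def common_left_nbrs_def by blast+
    moreover have "N\<^sub>Y (B' \<inter> X) \<subseteq> N\<^sub>Y (B \<inter> X)" "N\<^sub>X (B' \<inter> Y) \<subseteq> N\<^sub>X (B \<inter> Y)"
      using sub by (intro N_Y_antimono N_X_antimono; blast)+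
    ultimately have "B' \<inter> Y \<subseteq> B" "B' \<inter> X \<subseteq> B" using B by blast+
    then have "B' \<subseteq> B" using that unfolding biclique_def by blast
    with sub show False by blast
  qed
  with bc show "B \<in> \<B>" unfolding max_bicliques_def by blast
qed

lemma max_biclique_iff: "B \<in> \<B> \<longleftrightarrow> B \<subseteq> X \<union> Y \<and> B \<inter> X \<noteq> {} \<and> B \<inter> Y \<noteq> {} \<and>
    B \<inter> Y = N\<^sub>Y (B \<inter> X) \<and> B \<inter> X = N\<^sub>X (B \<inter> Y)"
proof
  assume "B \<in> \<B>"
  then have bc: "biclique X Y E B" and maximal: "\<And>B'. biclique X Y E B' \<Longrightarrow> \<not> B \<subset> B'"
    unfolding max_bicliques_def by auto
  have "N\<^sub>Y (B \<inter> X) \<subseteq> B"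
  proof
    fix y assume "y \<in> N\<^sub>Y (B \<inter> X)"
    then have "biclique X Y E (insert y B)" by (rule biclique_insert_Y[OF bc])
    with maximal show "y \<in> B" by blast
  qed
  moreover have "N\<^sub>X (B \<inter> Y) \<subseteq> B"
  proof
    fix x assume "x \<in> N\<^sub>X (B \<inter> Y)"
    then have "biclique X Y E (insert x B)" by (rule biclique_insert_X[OF bc])
    with maximal show "x \<in> B" by blast
  qed
  moreover have "B \<inter> Y \<subseteq> N\<^sub>Y (B \<inter> X)" "B \<inter> X \<subseteq> N\<^sub>X (B \<inter> Y)"
    using bc unfolding biclique_def common_right_nbrs_def common_left_nbrs_def by blast+
  ultimately have "B \<inter> Y = N\<^sub>Y (B \<inter> X)" "B \<inter> X = N\<^sub>X (B \<inter> Y)"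
    using N_Y_subset N_X_subset by blast+
  with bc show "B \<subseteq> X \<union> Y \<and> B \<inter> X \<noteq> {} \<and> B \<inter> Y \<noteq> {} \<and>
      B \<inter> Y = N\<^sub>Y (B \<inter> X) \<and> B \<inter> X = N\<^sub>X (B \<inter> Y)"
    unfolding biclique_def by blast
next
  assume "B \<subseteq> X \<union> Y \<and> B \<inter> X \<noteq> {} \<and> B \<inter> Y \<noteq> {} \<and>
      B \<inter> Y = N\<^sub>Y (B \<inter> X) \<and> B \<inter> X = N\<^sub>X (B \<inter> Y)"
  then show "B \<in> \<B>" by (elim conjE) (rule closed_biclique_maximal; assumption)
qed

lemma max_biclique_subset: "B \<in> \<B> \<Longrightarrow> B \<subseteq> X \<union> Y"
  and max_biclique_X_nonempty: "B \<in> \<B> \<Longrightarrow> B \<inter> X \<noteq> {}"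
  and max_biclique_Y_nonempty: "B \<in> \<B> \<Longrightarrow> B \<inter> Y \<noteq> {}"
  and max_biclique_Y_shore: "B \<in> \<B> \<Longrightarrow> B \<inter> Y = N\<^sub>Y (B \<inter> X)"
  and max_biclique_X_shore: "B \<in> \<B> \<Longrightarrow> B \<inter> X = N\<^sub>X (B \<inter> Y)"
  by (blast dest: max_biclique_iff[THEN iffD1])+

lemma max_biclique_eqI:
  assumes "B \<in> \<B>" "B' \<in> \<B>" "B \<inter> X = B' \<inter> X"
  shows "B = B'"
proof -
  have split: "C = C \<inter> X \<union> N\<^sub>Y (C \<inter> X)" if "C \<in> \<B>" for C
    using max_biclique_subset[OF that] max_biclique_Y_shore[OF that] by blast
  show ?thesis using split[OF assms(1)] split[OF assms(2)] assms(3) by simp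
qed

lemma max_biclique_X_subset_iff:
  assumes "B \<in> \<B>" "B' \<in> \<B>"
  shows "B \<inter> X \<subseteq> B' \<inter> X \<longleftrightarrow> B' \<inter> Y \<subseteq> B \<inter> Y"
  by (metis assms max_biclique_X_shore max_biclique_Y_shore N_X_antimono N_Y_antimono)

lemma max_biclique_X_psubset_iff:
  assumes "B \<in> \<B>" "B' \<in> \<B>"
  shows "B \<inter> X \<subset> B' \<inter> X \<longleftrightarrow> B' \<inter> Y \<subset> B \<inter> Y"
  using max_biclique_X_subset_iff[OF assms] max_biclique_X_subset_iff[OF assms(2,1)]
  unfolding psubset_eq by blast

lemma finite_max_bicliques: "finite \<B>"
proof -
  have "\<B> \<subseteq> Pow (X \<union> Y)" using max_biclique_subset by auto
  then show ?thesis using finite_X finite_Y finite_subset by blast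
qed

lemma max_biclique_edge: "B \<in> \<B> \<Longrightarrow> x \<in> B \<inter> X \<Longrightarrow> y \<in> B \<inter> Y \<Longrightarrow> (x, y) \<in> E"
  using max_biclique_Y_shore[of B] unfolding common_right_nbrs_def by blast

lemma max_biclique_nonedge:
  assumes "B \<in> \<B>" "x \<in> X" "x \<notin> B"
  obtains y where "y \<in> B \<inter> Y" "(x, y) \<notin> E"
  using assms max_biclique_X_shore[OF assms(1)] unfolding common_left_nbrs_def by blast

definition generated_biclique :: "'a set \<Rightarrow> 'a set" where
  "generated_biclique A = N\<^sub>X (N\<^sub>Y A) \<union> N\<^sub>Y A"

lemma generated_max_biclique:
  assumes "A \<subseteq> X" "A \<noteq> {}" "N\<^sub>Y A \<noteq> {}"
  shows "generated_biclique A \<in> \<B>"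
    and "generated_biclique A \<inter> X = N\<^sub>X (N\<^sub>Y A)"
    and "generated_biclique A \<inter> Y = N\<^sub>Y A"
    and "A \<subseteq> generated_biclique A \<inter> X"
proof -
  show X_shore: "generated_biclique A \<inter> X = N\<^sub>X (N\<^sub>Y A)"
    and Y_shore: "generated_biclique A \<inter> Y = N\<^sub>Y A"
    unfolding generated_biclique_def using N_X_subset N_Y_subset XY_disjoint by blast+
  show "A \<subseteq> generated_biclique A \<inter> X" using X_shore subset_N_X_N_Y[OF assms(1)] by simp
  show "generated_biclique A \<in> \<B>"
    unfolding max_biclique_iff X_shore Y_shore N_Y_N_X_N_Y[OF assms(1)]
    using subset_N_X_N_Y[OF assms(1)] assms(2,3) N_X_subset N_Y_subset
    unfolding generated_biclique_def by blast
qed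

lemma closure_subset_max_biclique:
  assumes "B \<in> \<B>" "A \<subseteq> B \<inter> X"
  shows "N\<^sub>X (N\<^sub>Y A) \<subseteq> B \<inter> X"
  by (metis assms N_X_antimono N_Y_antimono max_biclique_X_shore max_biclique_Y_shore)

lemma arcs_iff: "(B, B') \<in> arcs \<longleftrightarrow> B \<in> \<B> \<and> B' \<in> \<B> \<and> B \<inter> X \<subset> B' \<inter> X \<and>
    \<not> (\<exists>C\<in>\<B>. B \<inter> X \<subset> C \<inter> X \<and> C \<inter> X \<subset> B' \<inter> X)"
  unfolding Hgraph_def bc_less_def bc_le_def by auto

lemma arcs_subset: "arcs \<subseteq> \<B> \<times> \<B>"
  and arcs_max_biclique: "(B, B') \<in> arcs \<Longrightarrow> B \<in> \<B> \<and> B' \<in> \<B>"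
  and arcs_X_psubset: "(B, B') \<in> arcs \<Longrightarrow> B \<inter> X \<subset> B' \<inter> X"
  by (auto simp: arcs_iff)

lemma X_psubset_imp_trancl_arcs:
  assumes "B \<in> \<B>" "B' \<in> \<B>" "B \<inter> X \<subset> B' \<inter> X"
  shows "(B, B') \<in> arcs\<^sup>+"
  using assms
proof (induction "card (B' \<inter> X - B \<inter> X)" arbitrary: B B' rule: less_induct)
  case less
  show ?case
  proof (cases "\<exists>C\<in>\<B>. B \<inter> X \<subset> C \<inter> X \<and> C \<inter> X \<subset> B' \<inter> X")
    case False
    with less.prems show ?thesis by (simp add: arcs_iff r_into_trancl)
  next
    case True
    then obtain C where C: "C \<in> \<B>" "B \<inter> X \<subset> C \<inter> X" "C \<inter> X \<subset> B' \<inter> X" by blast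
    have fin: "finite (B' \<inter> X - B \<inter> X)" using finite_X by auto
    have "card (C \<inter> X - B \<inter> X) < card (B' \<inter> X - B \<inter> X)"
      by (rule psubset_card_mono[OF fin]) (use C in blast)
    then have "(B, C) \<in> arcs\<^sup>+" using less.hyps less.prems(1) C(1,2) by blast
    moreover have "card (B' \<inter> X - C \<inter> X) < card (B' \<inter> X - B \<inter> X)"
      by (rule psubset_card_mono[OF fin]) (use C in blast)
    then have "(C, B') \<in> arcs\<^sup>+" using less.hyps less.prems(2) C(1,3) by blast
    ultimately show ?thesis by (rule trancl_trans)
  qed
qed

lemma arcs_target_X_not_singleton: "(B, B') \<in> arcs \<Longrightarrow> B' \<inter> X \<noteq> {x}"
  by (metis arcs_X_psubset arcs_max_biclique max_biclique_X_nonempty psubset_eq subset_singletonD)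

lemma trancl_arcs_X_psubset: "(B, B') \<in> arcs\<^sup>+ \<Longrightarrow> B \<inter> X \<subset> B' \<inter> X"
  by (induction rule: trancl_induct) (auto dest: arcs_X_psubset)

end

section \<open>Weak components and contractions\<close>

lemma conn_rel_equiv: "equiv V (conn_rel V F)"
proof (rule equivI)
  show "conn_rel V F \<subseteq> V \<times> V" "refl_on V (conn_rel V F)"
    unfolding refl_on_def conn_rel_def by auto
  show "sym (conn_rel V F)"
  proof (rule symI)
    fix a b assume "(a, b) \<in> conn_rel V F"
    then have ab: "a \<in> V" "b \<in> V" "(a, b) \<in> ((F \<inter> V \<times> V) \<union> (F \<inter> V \<times> V)\<inverse>)\<^sup>*"
      unfolding conn_rel_def by auto
    have "(b, a) \<in> (((F \<inter> V \<times> V) \<union> (F \<inter> V \<times> V)\<inverse>)\<inverse>)\<^sup>*"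
      using ab(3) by (rule rtrancl_converseI)
    also have "((F \<inter> V \<times> V) \<union> (F \<inter> V \<times> V)\<inverse>)\<inverse> = (F \<inter> V \<times> V) \<union> (F \<inter> V \<times> V)\<inverse>"
      by auto
    finally show "(b, a) \<in> conn_rel V F" using ab unfolding conn_rel_def by auto
  qed
  show "trans (conn_rel V F)"
    unfolding trans_def conn_rel_def by (auto intro: rtrancl_trans)
qed

lemma conn_rel_subset: "conn_rel V F \<subseteq> V \<times> V"
  unfolding conn_rel_def by auto

lemma conn_relI: "(a, b) \<in> F \<Longrightarrow> a \<in> V \<Longrightarrow> b \<in> V \<Longrightarrow> (a, b) \<in> conn_rel V F"
  and conn_relI_converse: "(a, b) \<in> F \<Longrightarrow> a \<in> V \<Longrightarrow> b \<in> V \<Longrightarrow> (b, a) \<in> conn_rel V F"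
  and conn_rel_refl: "a \<in> V \<Longrightarrow> (a, a) \<in> conn_rel V F"
  unfolding conn_rel_def by auto

lemma conn_rel_trans: "(a, b) \<in> conn_rel V F \<Longrightarrow> (b, c) \<in> conn_rel V F \<Longrightarrow> (a, c) \<in> conn_rel V F"
  and conn_rel_sym: "(a, b) \<in> conn_rel V F \<Longrightarrow> (b, a) \<in> conn_rel V F"
  using conn_rel_equiv[of V F] unfolding equiv_def trans_def sym_def by blast+

lemma trancl_imp_conn_rel:
  assumes "(a, b) \<in> F\<^sup>+" "F \<subseteq> V \<times> V"
  shows "(a, b) \<in> conn_rel V F"
  using assms(1)
proof (induction rule: trancl_induct)
  case (base y)
  with assms(2) show ?case by (auto intro: conn_relI)
next
  case (step y z)
  with assms(2) show ?case by (auto intro: conn_rel_trans conn_relI)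
qed

lemma conn_rel_invariant:
  assumes "(a, b) \<in> conn_rel V F"
    and "\<And>x y. (x, y) \<in> F \<Longrightarrow> x \<in> V \<Longrightarrow> y \<in> V \<Longrightarrow> g x = g y"
  shows "g a = g b"
proof -
  have "(a, b) \<in> ((F \<inter> V \<times> V) \<union> (F \<inter> V \<times> V)\<inverse>)\<^sup>*"
    using assms(1) unfolding conn_rel_def by auto
  then show ?thesis
    by (induction rule: rtrancl_induct) (use assms(2) in auto)
qed

lemma conn_rel_iff_same_image:
  assumes F_const: "\<forall>(a, b)\<in>F. \<rho> a = \<rho> b"
    and fibre_conn: "\<forall>p\<in>P. (s (\<rho> p), p) \<in> conn_rel P F"
  shows "(a, b) \<in> conn_rel P F \<longleftrightarrow> a \<in> P \<and> b \<in> P \<and> \<rho> a = \<rho> b"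
proof
  assume ab: "(a, b) \<in> conn_rel P F"
  then have "\<rho> a = \<rho> b" by (rule conn_rel_invariant) (use F_const in auto)
  with ab conn_rel_subset[of P F] show "a \<in> P \<and> b \<in> P \<and> \<rho> a = \<rho> b" by blast
next
  assume ab: "a \<in> P \<and> b \<in> P \<and> \<rho> a = \<rho> b"
  with fibre_conn have "(s (\<rho> a), a) \<in> conn_rel P F" "(s (\<rho> a), b) \<in> conn_rel P F"
    by auto
  then show "(a, b) \<in> conn_rel P F" by (blast intro: conn_rel_sym conn_rel_trans)
qed

lemma quotient_conn_rel_fibres:
  assumes \<rho>_into: "\<forall>p\<in>P. \<rho> p \<in> Q" and s_section: "\<forall>q\<in>Q. s q \<in> P \<and> \<rho> (s q) = q"
    and F_const: "\<forall>(a, b)\<in>F. \<rho> a = \<rho> b"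
    and fibre_conn: "\<forall>p\<in>P. (s (\<rho> p), p) \<in> conn_rel P F"
  shows "P // conn_rel P F = (\<lambda>q. {p\<in>P. \<rho> p = q}) ` Q"
proof
  have R_iff: "(a, b) \<in> conn_rel P F \<longleftrightarrow> a \<in> P \<and> b \<in> P \<and> \<rho> a = \<rho> b" for a b
    using conn_rel_iff_same_image[OF F_const fibre_conn] .
  show "P // conn_rel P F \<subseteq> (\<lambda>q. {p\<in>P. \<rho> p = q}) ` Q"
  proof
    fix C assume "C \<in> P // conn_rel P F"
    then obtain p where "p \<in> P" "C = conn_rel P F `` {p}" unfolding quotient_def by blast
    with R_iff \<rho>_into have "C = {p'\<in>P. \<rho> p' = \<rho> p}" "\<rho> p \<in> Q" by auto
    then show "C \<in> (\<lambda>q. {p\<in>P. \<rho> p = q}) ` Q" by blast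
  qed
  show "(\<lambda>q. {p\<in>P. \<rho> p = q}) ` Q \<subseteq> P // conn_rel P F"
  proof
    fix C assume "C \<in> (\<lambda>q. {p\<in>P. \<rho> p = q}) ` Q"
    then obtain q where "q \<in> Q" "C = {p\<in>P. \<rho> p = q}" by blast
    with s_section R_iff have "s q \<in> P" "C = conn_rel P F `` {s q}" by auto
    then show "C \<in> P // conn_rel P F" unfolding quotient_def by blast
  qed
qed

lemma iso_contractionI:
  fixes H\<^sub>1 :: "'b digraph" and H\<^sub>2 :: "'c digraph" and \<rho> :: "'c \<Rightarrow> 'b" and s :: "'b \<Rightarrow> 'c"
  assumes F_arcs: "F \<subseteq> snd H\<^sub>2"
    and \<rho>_into: "\<forall>p\<in>fst H\<^sub>2. \<rho> p \<in> fst H\<^sub>1"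
    and s_section: "\<forall>q\<in>fst H\<^sub>1. s q \<in> fst H\<^sub>2 \<and> \<rho> (s q) = q"
    and F_const: "\<forall>(a, b)\<in>F. \<rho> a = \<rho> b"
    and fibre_conn: "\<forall>p\<in>fst H\<^sub>2. (s (\<rho> p), p) \<in> conn_rel (fst H\<^sub>2) F"
    and arcs_image: "\<forall>q\<^sub>1\<in>fst H\<^sub>1. \<forall>q\<^sub>2\<in>fst H\<^sub>1. (q\<^sub>1, q\<^sub>2) \<in> snd H\<^sub>1 \<longleftrightarrow>
        q\<^sub>1 \<noteq> q\<^sub>2 \<and> (\<exists>a\<in>fst H\<^sub>2. \<exists>b\<in>fst H\<^sub>2. \<rho> a = q\<^sub>1 \<and> \<rho> b = q\<^sub>2 \<and> (a, b) \<in> snd H\<^sub>2)"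
  shows "iso_contraction H\<^sub>1 H\<^sub>2"
proof -
  define P where "P = fst H\<^sub>2"
  define R where "R = conn_rel P F"
  define fibre where "fibre q = {p\<in>P. \<rho> p = q}" for q
  have quotient_eq: "P // R = fibre ` fst H\<^sub>1"
    unfolding P_def R_def fibre_def[abs_def]
    by (rule quotient_conn_rel_fibres[OF \<rho>_into s_section F_const fibre_conn])
  have inj: "inj_on fibre (fst H\<^sub>1)"
  proof (rule inj_onI)
    fix q\<^sub>1 q\<^sub>2 assume q: "q\<^sub>1 \<in> fst H\<^sub>1" "q\<^sub>2 \<in> fst H\<^sub>1" "fibre q\<^sub>1 = fibre q\<^sub>2"
    then have "s q\<^sub>1 \<in> fibre q\<^sub>2" using s_section unfolding fibre_def P_def by auto
    with s_section q(1) show "q\<^sub>1 = q\<^sub>2" unfolding fibre_def by auto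
  qed
  have "digraph_iso H\<^sub>1 (contract H\<^sub>2 F)"
    unfolding digraph_iso_def
  proof (intro exI conjI ballI)
    show "bij_betw fibre (fst H\<^sub>1) (fst (contract H\<^sub>2 F))"
      unfolding bij_betw_def contract_def Let_def using inj quotient_eq unfolding P_def R_def by simp
    fix u w assume uw: "u \<in> fst H\<^sub>1" "w \<in> fst H\<^sub>1"
    have "fibre u \<in> P // R" "fibre w \<in> P // R" using quotient_eq uw by auto
    then have "(fibre u, fibre w) \<in> snd (contract H\<^sub>2 F) \<longleftrightarrow>
        fibre u \<noteq> fibre w \<and> (\<exists>a\<in>fibre u. \<exists>b\<in>fibre w. (a, b) \<in> snd H\<^sub>2)"
      unfolding contract_def Let_def P_def R_def by simp
    also have "\<dots> \<longleftrightarrow> u \<noteq> w \<and> (\<exists>a\<in>P. \<exists>b\<in>P. \<rho> a = u \<and> \<rho> b = w \<and> (a, b) \<in> snd H\<^sub>2)"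
      using inj uw unfolding inj_on_def fibre_def by blast
    also have "\<dots> \<longleftrightarrow> (u, w) \<in> snd H\<^sub>1" using arcs_image uw unfolding P_def by blast
    finally show "(u, w) \<in> snd H\<^sub>1 \<longleftrightarrow> (fibre u, fibre w) \<in> snd (contract H\<^sub>2 F)" by simp
  qed
  with F_arcs show ?thesis unfolding iso_contraction_def by blast
qed

lemma card_quotient_less:
  assumes fin: "finite Q" and eqv_Q: "equiv Q R'" and eqv_P: "equiv P R"
    and f_into: "\<forall>q\<in>Q. f q \<in> P"
    and f_compat: "\<forall>q q'. (q, q') \<in> R' \<longrightarrow> (f q, f q') \<in> R"
    and f_surj: "\<forall>p\<in>P. \<exists>q\<in>Q. (f q, p) \<in> R"
    and merged: "q\<^sub>1 \<in> Q" "q\<^sub>2 \<in> Q" "(q\<^sub>1, q\<^sub>2) \<notin> R'" "(f q\<^sub>1, f q\<^sub>2) \<in> R"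
  shows "card (P // R) < card (Q // R')"
proof -
  define \<phi> where "\<phi> C = R `` (f ` C)" for C
  have \<phi>_class: "\<phi> (R' `` {q}) = R `` {f q}" if "q \<in> Q" for q
  proof
    show "\<phi> (R' `` {q}) \<subseteq> R `` {f q}"
      using f_compat eqv_P unfolding \<phi>_def equiv_def trans_def by blast
    have "(q, q) \<in> R'" using eqv_Q that unfolding equiv_def refl_on_def by blast
    then show "R `` {f q} \<subseteq> \<phi> (R' `` {q})" unfolding \<phi>_def by blast
  qed
  have image: "\<phi> ` (Q // R') = P // R"
  proof
    show "\<phi> ` (Q // R') \<subseteq> P // R"
      using \<phi>_class f_into unfolding quotient_def by auto
    show "P // R \<subseteq> \<phi> ` (Q // R')"
    proof
      fix C assume "C \<in> P // R"
      then obtain p where p: "p \<in> P" "C = R `` {p}" unfolding quotient_def by blast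
      obtain q where q: "q \<in> Q" "(f q, p) \<in> R" using f_surj p by blast
      have "R `` {f q} = R `` {p}" using eqv_P q(2) by (rule equiv_class_eq)
      with \<phi>_class q p have "C = \<phi> (R' `` {q})" by simp
      with q show "C \<in> \<phi> ` (Q // R')" unfolding quotient_def by blast
    qed
  qed
  have not_inj: "\<not> inj_on \<phi> (Q // R')"
  proof
    assume inj: "inj_on \<phi> (Q // R')"
    have "R `` {f q\<^sub>1} = R `` {f q\<^sub>2}" using eqv_P merged(4) by (rule equiv_class_eq)
    with \<phi>_class merged have "\<phi> (R' `` {q\<^sub>1}) = \<phi> (R' `` {q\<^sub>2})" by simp
    moreover have "R' `` {q\<^sub>1} \<in> Q // R'" "R' `` {q\<^sub>2} \<in> Q // R'"
      using merged unfolding quotient_def by auto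
    ultimately have "R' `` {q\<^sub>1} = R' `` {q\<^sub>2}" using inj unfolding inj_on_def by blast
    with eqv_Q merged show False by (metis eq_equiv_class_iff)
  qed
  have "finite (Q // R')" using fin eqv_Q by (simp add: finite_quotient equiv_def)
  with not_inj image show ?thesis
    by (metis card_image_le inj_on_iff_eq_card order_le_neq_trans)
qed

context bip_graph
begin

lemma X_subset_imp_conn_rel:
  assumes "B \<in> \<B>" "B' \<in> \<B>" "B \<inter> X \<subseteq> B' \<inter> X"
  shows "(B, B') \<in> conn_rel \<B> arcs"
proof (cases "B \<inter> X = B' \<inter> X")
  case True
  with assms show ?thesis using max_biclique_eqI conn_rel_refl by metis
next
  case False
  with assms have "(B, B') \<in> arcs\<^sup>+" using X_psubset_imp_trancl_arcs by blast
  then show ?thesis using arcs_subset by (rule trancl_imp_conn_rel)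
qed

lemma trancl_arcs_crossing:
  assumes "(a, b) \<in> arcs\<^sup>+"
    and "\<forall>c\<in>\<B>. a \<inter> X \<subseteq> c \<inter> X \<and> c \<inter> X \<subseteq> b \<inter> X \<longrightarrow> \<rho> c = q\<^sub>1 \<or> \<rho> c = q\<^sub>2"
    and "\<rho> a = q\<^sub>1" "\<rho> b = q\<^sub>2" "q\<^sub>1 \<noteq> q\<^sub>2"
  shows "\<exists>c d. (c, d) \<in> arcs \<and> \<rho> c = q\<^sub>1 \<and> \<rho> d = q\<^sub>2"
  using assms
proof (induction rule: converse_trancl_induct)
  case (base y)
  then show ?case by blast
next
  case (step y z)
  have yz: "y \<inter> X \<subset> z \<inter> X" using step.hyps(1) by (rule arcs_X_psubset)
  have "z \<inter> X \<subset> b \<inter> X" using step.hyps(2) by (rule trancl_arcs_X_psubset)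
  with yz step.prems(1) arcs_max_biclique[OF step.hyps(1)] have "\<rho> z = q\<^sub>1 \<or> \<rho> z = q\<^sub>2"
    by blast
  then show ?case
  proof
    assume "\<rho> z = q\<^sub>2"
    with step.hyps(1) step.prems(2) show ?thesis by blast
  next
    assume "\<rho> z = q\<^sub>1"
    moreover have "\<forall>c\<in>\<B>. z \<inter> X \<subseteq> c \<inter> X \<and> c \<inter> X \<subseteq> b \<inter> X \<longrightarrow> \<rho> c = q\<^sub>1 \<or> \<rho> c = q\<^sub>2"
      using step.prems(1) yz by blast
    ultimately show ?thesis using step.IH step.prems(3,4) by blast
  qed
qed

end

section \<open>Distance hereditary graphs\<close>

definition adj_in :: "('a \<times> 'a) set \<Rightarrow> 'a set \<Rightarrow> ('a \<times> 'a) set" where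
  "adj_in E S = {(x, y). x \<in> S \<and> y \<in> S \<and> adj E x y}"

lemma adj_in_converse: "(adj_in E S)\<inverse> = adj_in E S"
  unfolding adj_in_def adj_def by auto

lemma rtrancl_adj_in_sym: "(a, b) \<in> (adj_in E S)\<^sup>* \<Longrightarrow> (b, a) \<in> (adj_in E S)\<^sup>*"
  by (metis adj_in_converse rtrancl_converseI)

lemma rtrancl_adj_in_imp_walk:
  assumes "(a, b) \<in> (adj_in E S)\<^sup>*" "a \<in> S"
  shows "\<exists>p. is_walk_in E S p \<and> hd p = a \<and> last p = b"
  using assms(1)
proof (induction rule: rtrancl_induct)
  case base
  have "is_walk_in E S [a]" using assms(2) unfolding is_walk_in_def by simp
  then show ?case by force
next
  case (step y z)
  then obtain p where p: "is_walk_in E S p" "hd p = a" "last p = y" by blast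
  have yz: "z \<in> S" "adj E y z" using step.hyps(2) unfolding adj_in_def by auto
  have "p \<noteq> []" using p(1) unfolding is_walk_in_def by simp
  then have "is_walk_in E S (p @ [z])"
    using p yz unfolding is_walk_in_def
    by (auto simp: nth_append last_conv_nth less_Suc_eq) (subgoal_tac "i = length p - 1", simp_all)
  with p(2) \<open>p \<noteq> []\<close> show ?case by force
qed

lemma connected_inI:
  assumes "\<forall>a\<in>S. \<forall>b\<in>S. (a, b) \<in> (adj_in E S)\<^sup>*"
  shows "connected_in E S"
  unfolding connected_in_def using assms rtrancl_adj_in_imp_walk by metis

lemma connected_in_component:
  assumes "u \<in> T"
  shows "connected_in E {x. (u, x) \<in> (adj_in E T)\<^sup>*}" (is "connected_in E ?S")
proof (rule connected_inI)
  have stay: "(a, b) \<in> (adj_in E T)\<^sup>* \<Longrightarrow> a \<in> ?S \<Longrightarrow> b \<in> ?S \<and> (a, b) \<in> (adj_in E ?S)\<^sup>*"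
    for a b
  proof (induction rule: rtrancl_induct)
    case (step y z)
    then have y: "y \<in> ?S" "(a, y) \<in> (adj_in E ?S)\<^sup>*" by auto
    with step.hyps(2) have "z \<in> ?S" by (auto intro: rtrancl_into_rtrancl)
    with y step.hyps(2) show ?case unfolding adj_in_def by (auto intro: rtrancl_into_rtrancl)
  qed simp
  show "\<forall>a\<in>?S. \<forall>b\<in>?S. (a, b) \<in> (adj_in E ?S)\<^sup>*"
  proof (intro ballI)
    fix a b assume "a \<in> ?S" "b \<in> ?S"
    then have "(a, u) \<in> (adj_in E ?S)\<^sup>*" "(u, b) \<in> (adj_in E ?S)\<^sup>*"
      using stay rtrancl_adj_in_sym[of u a] by auto
    then show "(a, b) \<in> (adj_in E ?S)\<^sup>*" by (rule rtrancl_trans)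
  qed
qed

lemma gdist_attained:
  assumes "connected_in E S" "u \<in> S" "w \<in> S"
  obtains p where "is_walk_in E S p" "hd p = u" "last p = w" "gdist E S u w = enat (length p - 1)"
proof -
  let ?M = "{enat (length p - 1) | p. is_walk_in E S p \<and> hd p = u \<and> last p = w}"
  have "?M \<noteq> {}" using assms unfolding connected_in_def by blast
  then obtain m where "m \<in> ?M" by blast
  then have "(LEAST x. x \<in> ?M) \<in> ?M" by (rule LeastI)
  moreover have "Inf ?M = (LEAST x. x \<in> ?M)" unfolding Inf_enat_def by (rule if_not_P[OF \<open>?M \<noteq> {}\<close>])
  ultimately have "Inf ?M \<in> ?M" by simp
  then show ?thesis using that unfolding gdist_def by blast
qed

lemma gdist_le_walk:
  assumes "is_walk_in E S p" "hd p = u" "last p = w"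
  shows "gdist E S u w \<le> enat (length p - 1)"
  unfolding gdist_def using assms by (blast intro: Inf_lower)

lemma distance_hereditary_dist_2:
  assumes DH: "distance_hereditary V E" and "S \<subseteq> V" and conn: "connected_in E S"
    and uw: "u \<in> S" "w \<in> S" and "z \<in> V" "adj E u z" "adj E z w"
  shows "u = w \<or> adj E u w \<or> (\<exists>x\<in>S. adj E u x \<and> adj E x w)"
proof -
  have "is_walk_in E V [u, z, w]"
    unfolding is_walk_in_def using assms by (auto simp: less_Suc_eq nth_Cons')
  then have "gdist E V u w \<le> enat 2"
    using gdist_le_walk[of E V "[u, z, w]" u w] by (simp add: numeral_2_eq_2)
  moreover have "gdist E S u w = gdist E V u w"
    using assms unfolding distance_hereditary_def by blast
  moreover obtain p where p: "is_walk_in E S p" "hd p = u" "last p = w"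
    and len: "gdist E S u w = enat (length p - 1)"
    using gdist_attained[OF conn uw] .
  ultimately have "enat (length p - 1) \<le> enat 2" by simp
  then have "length p \<le> 3" by simp
  moreover have "p \<noteq> []" "set p \<subseteq> S" and step: "\<And>i. Suc i < length p \<Longrightarrow> adj E (p ! i) (p ! Suc i)"
    using p(1) unfolding is_walk_in_def by auto
  ultimately have "length p = 1 \<or> length p = 2 \<or> length p = 3"
    by (cases "length p") auto
  then consider a where "p = [a]" | a b where "p = [a, b]" | a b c where "p = [a, b, c]"
    by (auto simp: length_Suc_conv numeral_2_eq_2 numeral_3_eq_3)
  then show ?thesis
  proof cases
    case 1 with p show ?thesis by simp
  next
    case (2 a b) with p step[of 0] show ?thesis by simp
  next
    case (3 a b c) with p step[of 0] step[of 1] \<open>set p \<subseteq> S\<close> show ?thesis by auto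
  qed
qed

lemma distance_hereditary_component_dist_2:
  assumes DH: "distance_hereditary V E" and "T \<subseteq> V" "u \<in> T"
    and "(u, w) \<in> (adj_in E T)\<^sup>*" "z \<in> V" "adj E u z" "adj E z w"
  shows "u = w \<or> adj E u w \<or> (\<exists>x\<in>T. adj E u x \<and> adj E x w)"
proof -
  let ?S = "{x. (u, x) \<in> (adj_in E T)\<^sup>*}"
  have "?S \<subseteq> T"
  proof
    fix x assume "x \<in> ?S"
    then have "(u, x) \<in> (adj_in E T)\<^sup>*" by simp
    then show "x \<in> T" using \<open>u \<in> T\<close> by (induction rule: rtrancl_induct) (auto simp: adj_in_def)
  qed
  with assms distance_hereditary_dist_2[OF DH _ connected_in_component[OF \<open>u \<in> T\<close>]]
  show ?thesis by blast
qed

text \<open>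
  Together with \<open>z\<close> the walk closes a 6-cycle; here the absence of induced holes and
  dominoes is used.
\<close>
lemma distance_hereditary_6_cycle:
  assumes DH: "distance_hereditary V E"
    and "p\<^sub>0 \<in> V" "p\<^sub>1 \<in> V" "p\<^sub>2 \<in> V" "p\<^sub>3 \<in> V" "p\<^sub>4 \<in> V" "z \<in> V"
    and "adj E p\<^sub>0 p\<^sub>1" "adj E p\<^sub>1 p\<^sub>2" "adj E p\<^sub>2 p\<^sub>3" "adj E p\<^sub>3 p\<^sub>4" "adj E p\<^sub>0 z" "adj E z p\<^sub>4"
  shows "p\<^sub>0 = p\<^sub>4 \<or> adj E p\<^sub>0 p\<^sub>4 \<or>
    (\<exists>x\<in>{p\<^sub>0, p\<^sub>1, p\<^sub>2, p\<^sub>3, p\<^sub>4}. adj E p\<^sub>0 x \<and> adj E x p\<^sub>4)"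
proof -
  let ?S = "{p\<^sub>0, p\<^sub>1, p\<^sub>2, p\<^sub>3, p\<^sub>4}"
  let ?R = "adj_in E ?S"
  have "(p\<^sub>0, p\<^sub>1) \<in> ?R" "(p\<^sub>1, p\<^sub>2) \<in> ?R" "(p\<^sub>2, p\<^sub>3) \<in> ?R" "(p\<^sub>3, p\<^sub>4) \<in> ?R"
    using assms unfolding adj_in_def by auto
  then have "(p\<^sub>0, p\<^sub>1) \<in> ?R\<^sup>*" "(p\<^sub>0, p\<^sub>2) \<in> ?R\<^sup>*" "(p\<^sub>0, p\<^sub>3) \<in> ?R\<^sup>*" "(p\<^sub>0, p\<^sub>4) \<in> ?R\<^sup>*"
    by (meson r_into_rtrancl rtrancl_into_rtrancl)+
  then have reach: "(p\<^sub>0, x) \<in> ?R\<^sup>*" if "x \<in> ?S" for x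
    using that by auto
  have conn: "connected_in E ?S"
  proof (rule connected_inI, intro ballI)
    fix x y assume "x \<in> ?S" "y \<in> ?S"
    with reach have "(x, p\<^sub>0) \<in> ?R\<^sup>*" "(p\<^sub>0, y) \<in> ?R\<^sup>*" by (auto intro: rtrancl_adj_in_sym)
    then show "(x, y) \<in> ?R\<^sup>*" by (rule rtrancl_trans)
  qed
  have "?S \<subseteq> V" using assms by blast
  from distance_hereditary_dist_2[OF DH this conn, of p\<^sub>0 p\<^sub>4 z] assms show ?thesis by simp
qed

section \<open>Deleting a vertex of \<open>X\<close>\<close>

locale vertex_deletion = bip_graph +
  fixes v :: 'a
  assumes v_X: "v \<in> X"
begin

lemma v_notin_Y: "v \<notin> Y"
  using v_X XY_disjoint by blast

sublocale del: bip_graph "X - {v}" Y "del_edges E v"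
  using finite_X finite_Y XY_disjoint edges_XY
  by unfold_locales (auto simp: bipartite_graph_def del_edges_def)

lemma del_N_Y: "v \<notin> A \<Longrightarrow> del.N\<^sub>Y A = N\<^sub>Y A"
  unfolding common_right_nbrs_def del_edges_def using v_notin_Y by auto

lemma del_N_X: "B \<subseteq> Y \<Longrightarrow> del.N\<^sub>X B = N\<^sub>X B - {v}"
  unfolding common_left_nbrs_def del_edges_def using v_notin_Y by auto

lemma v_notin_del_max_biclique: "q \<in> del.\<B> \<Longrightarrow> v \<notin> q"
  using del.max_biclique_subset v_notin_Y by blast

lemma del_X_shore: "q \<in> del.\<B> \<Longrightarrow> q \<inter> (X - {v}) = q \<inter> X"
  using v_notin_del_max_biclique by blast

lemma del_max_biclique_X_nonempty: "q \<in> del.\<B> \<Longrightarrow> q \<inter> X \<noteq> {}"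
  using del.max_biclique_X_nonempty del_X_shore by metis

lemma del_max_biclique_Y_shore: "q \<in> del.\<B> \<Longrightarrow> q \<inter> Y = N\<^sub>Y (q \<inter> X)"
  using del.max_biclique_Y_shore del_X_shore del_N_Y v_notin_del_max_biclique
  by (metis IntD1)

lemma del_max_biclique_X_shore: "q \<in> del.\<B> \<Longrightarrow> q \<inter> X = N\<^sub>X (q \<inter> Y) - {v}"
  using del.max_biclique_X_shore del_X_shore del_N_X by (metis inf_le2)

lemma del_max_biclique_eqI: "q \<in> del.\<B> \<Longrightarrow> q' \<in> del.\<B> \<Longrightarrow> q \<inter> X = q' \<inter> X \<Longrightarrow> q = q'"
  using del.max_biclique_eqI del_X_shore by metis

lemma del_max_biclique_edge: "q \<in> del.\<B> \<Longrightarrow> x \<in> q \<inter> X \<Longrightarrow> y \<in> q \<inter> Y \<Longrightarrow> (x, y) \<in> E"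
  using del_max_biclique_Y_shore[of q] unfolding common_right_nbrs_def by blast

lemma del_max_bicliqueI:
  assumes "q \<subseteq> X \<union> Y" "v \<notin> q" "q \<inter> X \<noteq> {}" "q \<inter> Y \<noteq> {}"
    "q \<inter> Y = N\<^sub>Y (q \<inter> X)" "q \<inter> X = N\<^sub>X (q \<inter> Y) - {v}"
  shows "q \<in> del.\<B>"
proof -
  have qX: "q \<inter> (X - {v}) = q \<inter> X" using assms(2) by blast
  show ?thesis
    unfolding del.max_biclique_iff qX
  proof (intro conjI)
    show "q \<subseteq> X - {v} \<union> Y" using assms(1,2) by blast
    show "q \<inter> Y = del.N\<^sub>Y (q \<inter> X)" using assms(2,5) del_N_Y[of "q \<inter> X"] by simp
    show "q \<inter> X = del.N\<^sub>X (q \<inter> Y)" using assms(6) del_N_X[of "q \<inter> Y"] by simp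
  qed (use assms in blast)+
qed

lemma del_arcs_iff: "(q\<^sub>1, q\<^sub>2) \<in> del.arcs \<longleftrightarrow> q\<^sub>1 \<in> del.\<B> \<and> q\<^sub>2 \<in> del.\<B> \<and> q\<^sub>1 \<inter> X \<subset> q\<^sub>2 \<inter> X \<and>
    \<not> (\<exists>c\<in>del.\<B>. q\<^sub>1 \<inter> X \<subset> c \<inter> X \<and> c \<inter> X \<subset> q\<^sub>2 \<inter> X)"
  unfolding del.arcs_iff using del_X_shore by (smt (verit, best))

definition lift :: "'a set \<Rightarrow> 'a set" where
  "lift q = N\<^sub>X (q \<inter> Y) \<union> q \<inter> Y"

definition proj :: "'a set \<Rightarrow> 'a set" where
  "proj p = (p \<inter> X - {v}) \<union> N\<^sub>Y (p \<inter> X - {v})"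

lemma lift_X_shore: "lift q \<inter> X = N\<^sub>X (q \<inter> Y)"
  and lift_Y_shore: "lift q \<inter> Y = q \<inter> Y"
  unfolding lift_def using N_X_subset XY_disjoint by blast+

lemma lift_X_shore_minus_v: "q \<in> del.\<B> \<Longrightarrow> lift q \<inter> X - {v} = q \<inter> X"
  using lift_X_shore del_max_biclique_X_shore by simp

lemma lift_max_biclique:
  assumes q: "q \<in> del.\<B>"
  shows "lift q \<in> \<B>"
proof -
  have qX: "q \<inter> X \<subseteq> X" by blast
  have X_shore: "lift q \<inter> X = N\<^sub>X (N\<^sub>Y (q \<inter> X))"
    and Y_shore: "lift q \<inter> Y = N\<^sub>Y (q \<inter> X)"
    using lift_X_shore lift_Y_shore del_max_biclique_Y_shore[OF q] by simp_all
  show ?thesis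
    unfolding max_biclique_iff X_shore Y_shore N_Y_N_X_N_Y[OF qX]
  proof (intro conjI refl)
    show "lift q \<subseteq> X \<union> Y" unfolding lift_def using N_X_subset by blast
    show "N\<^sub>X (N\<^sub>Y (q \<inter> X)) \<noteq> {}"
      using subset_N_X_N_Y[OF qX] del_max_biclique_X_nonempty[OF q] by blast
    show "N\<^sub>Y (q \<inter> X) \<noteq> {}"
      using del.max_biclique_Y_nonempty[OF q] del_max_biclique_Y_shore[OF q] by simp
  qed
qed

lemma lift_X_subset_iff:
  assumes "q\<^sub>1 \<in> del.\<B>" "q\<^sub>2 \<in> del.\<B>"
  shows "lift q\<^sub>1 \<inter> X \<subseteq> lift q\<^sub>2 \<inter> X \<longleftrightarrow> q\<^sub>1 \<inter> X \<subseteq> q\<^sub>2 \<inter> X"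
proof
  assume "lift q\<^sub>1 \<inter> X \<subseteq> lift q\<^sub>2 \<inter> X"
  then show "q\<^sub>1 \<inter> X \<subseteq> q\<^sub>2 \<inter> X" using lift_X_shore_minus_v assms by blast
next
  assume "q\<^sub>1 \<inter> X \<subseteq> q\<^sub>2 \<inter> X"
  then have "q\<^sub>2 \<inter> Y \<subseteq> q\<^sub>1 \<inter> Y"
    using N_Y_antimono del_max_biclique_Y_shore assms by metis
  then show "lift q\<^sub>1 \<inter> X \<subseteq> lift q\<^sub>2 \<inter> X" using N_X_antimono lift_X_shore by metis
qed

lemma lift_X_psubset_iff:
  assumes "q\<^sub>1 \<in> del.\<B>" "q\<^sub>2 \<in> del.\<B>"
  shows "lift q\<^sub>1 \<inter> X \<subset> lift q\<^sub>2 \<inter> X \<longleftrightarrow> q\<^sub>1 \<inter> X \<subset> q\<^sub>2 \<inter> X"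
  using lift_X_subset_iff[OF assms] lift_X_subset_iff[OF assms(2,1)] unfolding psubset_eq by blast

lemma inj_on_lift: "inj_on lift del.\<B>"
proof (rule inj_onI)
  fix q\<^sub>1 q\<^sub>2 assume q: "q\<^sub>1 \<in> del.\<B>" "q\<^sub>2 \<in> del.\<B>" "lift q\<^sub>1 = lift q\<^sub>2"
  then have "q\<^sub>1 \<inter> X = q\<^sub>2 \<inter> X" using lift_X_subset_iff[OF q(1,2)] lift_X_subset_iff[OF q(2,1)] by blast
  then show "q\<^sub>1 = q\<^sub>2" by (rule del_max_biclique_eqI[OF q(1,2)])
qed

lemma lift_X_shore_ne_v: "q \<in> del.\<B> \<Longrightarrow> lift q \<inter> X \<noteq> {v}"
  using lift_X_shore_minus_v[of q] del_max_biclique_X_nonempty[of q] by auto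

lemma proj_X_shore: "proj p \<inter> X = p \<inter> X - {v}"
  and proj_Y_shore: "proj p \<inter> Y = N\<^sub>Y (p \<inter> X - {v})"
  unfolding proj_def using N_Y_subset XY_disjoint by blast+

lemma Y_shore_subset_proj: "p \<in> \<B> \<Longrightarrow> p \<inter> Y \<subseteq> proj p \<inter> Y"
  using proj_Y_shore max_biclique_Y_shore N_Y_antimono by (metis Diff_subset)

lemma proj_max_biclique:
  assumes p: "p \<in> \<B>" "p \<inter> X \<noteq> {v}"
  shows "proj p \<in> del.\<B>"
proof (rule del_max_bicliqueI)
  let ?A = "p \<inter> X - {v}"
  have "N\<^sub>X (N\<^sub>Y ?A) \<subseteq> p \<inter> X" by (rule closure_subset_max_biclique[OF p(1)]) blast
  moreover have "?A \<subseteq> N\<^sub>X (N\<^sub>Y ?A)" by (rule subset_N_X_N_Y) blast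
  ultimately show "proj p \<inter> X = N\<^sub>X (proj p \<inter> Y) - {v}"
    unfolding proj_X_shore proj_Y_shore by blast
  show "proj p \<inter> Y = N\<^sub>Y (proj p \<inter> X)" unfolding proj_X_shore proj_Y_shore ..
  show "proj p \<subseteq> X \<union> Y" "v \<notin> proj p"
    unfolding proj_def using N_Y_subset v_notin_Y by blast+
  show "proj p \<inter> X \<noteq> {}" unfolding proj_X_shore using max_biclique_X_nonempty[OF p(1)] p(2) by blast
  show "proj p \<inter> Y \<noteq> {}" using Y_shore_subset_proj[OF p(1)] max_biclique_Y_nonempty[OF p(1)] by blast
qed

lemma proj_lift: "q \<in> del.\<B> \<Longrightarrow> proj (lift q) = q"
  by (metis del_max_biclique_eqI lift_X_shore_minus_v lift_X_shore_ne_v lift_max_biclique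
      proj_X_shore proj_max_biclique)

lemma lift_proj_X_shore:
  assumes "p \<in> \<B>" "p \<inter> X \<noteq> {v}"
  shows "lift (proj p) \<inter> X - {v} = p \<inter> X - {v}" "lift (proj p) \<inter> X \<subseteq> p \<inter> X"
proof -
  show "lift (proj p) \<inter> X - {v} = p \<inter> X - {v}"
    using lift_X_shore_minus_v[OF proj_max_biclique[OF assms]] proj_X_shore by simp
  have "lift (proj p) \<inter> X = N\<^sub>X (N\<^sub>Y (p \<inter> X - {v}))" using lift_X_shore proj_Y_shore by simp
  also have "\<dots> \<subseteq> p \<inter> X" by (rule closure_subset_max_biclique[OF assms(1)]) blast
  finally show "lift (proj p) \<inter> X \<subseteq> p \<inter> X" .
qed

lemma unlifted_max_biclique:
  assumes p: "p \<in> \<B>" "p \<inter> X \<noteq> {v}" "p \<notin> lift ` del.\<B>"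
  shows "v \<in> p" "lift (proj p) \<inter> X = p \<inter> X - {v}" "(lift (proj p), p) \<in> arcs"
proof -
  have m: "lift (proj p) \<in> \<B>" by (rule lift_max_biclique[OF proj_max_biclique[OF p(1,2)]])
  moreover have "lift (proj p) \<noteq> p" using p(3) proj_max_biclique[OF p(1,2)] by blast
  ultimately have "lift (proj p) \<inter> X \<noteq> p \<inter> X" using max_biclique_eqI[OF _ p(1)] by blast
  then have v: "v \<in> p \<inter> X" "v \<notin> lift (proj p) \<inter> X"
    using lift_proj_X_shore[OF p(1,2)] by blast+
  then show "v \<in> p" by blast
  show X_eq: "lift (proj p) \<inter> X = p \<inter> X - {v}" using lift_proj_X_shore[OF p(1,2)] v by blast
  show "(lift (proj p), p) \<in> arcs"
    unfolding arcs_iff using m p(1) X_eq v by blast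
qed

lemma distance_hereditary_v_in_lift:
  assumes DH: "distance_hereditary (X \<union> Y) E"
    and a: "a \<in> \<B>" "v \<in> a" "a \<inter> X \<noteq> {v}" and b: "b \<in> \<B>" "a \<inter> X \<subseteq> b \<inter> X"
    and q: "q \<in> del.\<B>" "a \<inter> X - {v} \<subseteq> q \<inter> X" "q \<inter> X \<subseteq> b \<inter> X"
    and x: "x \<in> q \<inter> X" "x \<notin> a"
  shows "v \<in> lift q"
proof (rule ccontr)
  assume "v \<notin> lift q"
  then obtain y\<^sub>3 where y\<^sub>3: "y\<^sub>3 \<in> q \<inter> Y" "(v, y\<^sub>3) \<notin> E"
    using v_X unfolding lift_def common_left_nbrs_def by blast
  obtain y\<^sub>1 where y\<^sub>1: "y\<^sub>1 \<in> a \<inter> Y" "(x, y\<^sub>1) \<notin> E"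
    using max_biclique_nonedge[OF a(1)] x by blast
  obtain u where u: "u \<in> a \<inter> X" "u \<noteq> v" using a max_biclique_X_nonempty by blast
  obtain y\<^sub>0 where y\<^sub>0: "y\<^sub>0 \<in> b \<inter> Y" using max_biclique_Y_nonempty[OF b(1)] by blast
  have "(v, y\<^sub>1) \<in> E" "(u, y\<^sub>1) \<in> E" "(v, y\<^sub>0) \<in> E" "(x, y\<^sub>0) \<in> E"
    using max_biclique_edge a b v_X u y\<^sub>1 y\<^sub>0 x q(3) by blast+
  moreover have "(u, y\<^sub>3) \<in> E" "(x, y\<^sub>3) \<in> E"
    using del_max_biclique_edge[OF q(1)] u q(2) x y\<^sub>3 by blast+
  moreover have XY: "v \<in> X" "x \<in> X" "u \<in> X" "y\<^sub>1 \<in> Y" "y\<^sub>3 \<in> Y" "y\<^sub>0 \<in> Y"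
    using v_X x u y\<^sub>1 y\<^sub>3 y\<^sub>0 by blast+
  ultimately have "v = x \<or> adj E v x \<or> (\<exists>w\<in>{v, y\<^sub>1, u, y\<^sub>3, x}. adj E v w \<and> adj E w x)"
    by (intro distance_hereditary_6_cycle[OF DH, of v y\<^sub>1 u y\<^sub>3 x y\<^sub>0])
      (simp_all add: adj_XY adj_YX)
  moreover have "v \<noteq> x" using a(2) x(2) by blast
  moreover have "\<not> adj E v x" using not_adj_XX XY by blast
  moreover have "\<not> (adj E v w \<and> adj E w x)" if "w \<in> {v, y\<^sub>1, u, y\<^sub>3, x}" for w
    using that XY y\<^sub>1(2) y\<^sub>3(2) not_adj_XX[of v] adj_YX[of x y\<^sub>1] adj_XY[of v y\<^sub>3] by auto
  ultimately show False by blast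
qed

lemma proj_arc:
  assumes DH: "distance_hereditary (X \<union> Y) E"
    and ab: "(a, b) \<in> arcs" and a_ne: "a \<inter> X \<noteq> {v}" and proj_ne: "proj a \<noteq> proj b"
  shows "(proj a, proj b) \<in> del.arcs"
proof -
  have a: "a \<in> \<B>" and b: "b \<in> \<B>" and ab_X: "a \<inter> X \<subset> b \<inter> X"
    and no_between: "\<not> (\<exists>C\<in>\<B>. a \<inter> X \<subset> C \<inter> X \<and> C \<inter> X \<subset> b \<inter> X)"
    using ab unfolding arcs_iff by blast+
  have b_ne: "b \<inter> X \<noteq> {v}" using ab by (rule arcs_target_X_not_singleton)
  have pa: "proj a \<in> del.\<B>" and pb: "proj b \<in> del.\<B>"
    using proj_max_biclique a b a_ne b_ne by blast+
  have "proj a \<inter> X \<noteq> proj b \<inter> X" using del_max_biclique_eqI[OF pa pb] proj_ne by blast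
  then have "proj a \<inter> X \<subset> proj b \<inter> X" unfolding proj_X_shore using ab_X by blast
  moreover have "\<not> (\<exists>q\<in>del.\<B>. proj a \<inter> X \<subset> q \<inter> X \<and> q \<inter> X \<subset> proj b \<inter> X)"
  proof
    assume "\<exists>q\<in>del.\<B>. proj a \<inter> X \<subset> q \<inter> X \<and> q \<inter> X \<subset> proj b \<inter> X"
    then obtain q where q: "q \<in> del.\<B>" "a \<inter> X - {v} \<subset> q \<inter> X" "q \<inter> X \<subset> b \<inter> X - {v}"
      unfolding proj_X_shore by blast
    have lq: "lift q \<in> \<B>" using lift_max_biclique[OF q(1)] .
    have "b \<inter> Y \<subseteq> q \<inter> Y"
      using N_Y_antimono[of "q \<inter> X" "b \<inter> X"] q(3) del_max_biclique_Y_shore[OF q(1)]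
        max_biclique_Y_shore[OF b] by auto
    then have "lift q \<inter> X \<subseteq> b \<inter> X"
      using max_biclique_X_subset_iff[OF lq b] lift_Y_shore by simp
    moreover have "lift q \<inter> X \<noteq> b \<inter> X" using lift_X_shore_minus_v[OF q(1)] q(3) by blast
    moreover have "a \<inter> X \<subset> lift q \<inter> X"
    proof -
      obtain x where x: "x \<in> q \<inter> X" "x \<notin> a"
        using q(2) v_notin_del_max_biclique[OF q(1)] by blast
      have sub: "q \<inter> X \<subseteq> lift q \<inter> X" using lift_X_shore_minus_v[OF q(1)] by blast
      have "v \<in> a \<Longrightarrow> v \<in> lift q"
        using distance_hereditary_v_in_lift[OF DH a _ a_ne b] ab_X q x by blast
      with sub q(2) x v_X show ?thesis by blast
    qed
    ultimately show False using no_between lq by blast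
  qed
  ultimately show ?thesis unfolding del_arcs_iff using pa pb by blast
qed

lemma del_arc_imp_arc:
  assumes q: "(q\<^sub>1, q\<^sub>2) \<in> del.arcs" and \<rho>: "\<forall>c\<in>\<B>. c \<inter> X \<noteq> {v} \<longrightarrow> \<rho> c = proj c"
  shows "\<exists>c d. (c, d) \<in> arcs \<and> \<rho> c = q\<^sub>1 \<and> \<rho> d = q\<^sub>2"
proof -
  have q\<^sub>1: "q\<^sub>1 \<in> del.\<B>" and q\<^sub>2: "q\<^sub>2 \<in> del.\<B>" and lt: "q\<^sub>1 \<inter> X \<subset> q\<^sub>2 \<inter> X"
    and no_between: "\<not> (\<exists>c\<in>del.\<B>. q\<^sub>1 \<inter> X \<subset> c \<inter> X \<and> c \<inter> X \<subset> q\<^sub>2 \<inter> X)"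
    using q unfolding del_arcs_iff by blast+
  have "lift q\<^sub>1 \<inter> X \<subset> lift q\<^sub>2 \<inter> X" using lift_X_psubset_iff[OF q\<^sub>1 q\<^sub>2] lt by blast
  then have "(lift q\<^sub>1, lift q\<^sub>2) \<in> arcs\<^sup>+"
    by (rule X_psubset_imp_trancl_arcs[OF lift_max_biclique[OF q\<^sub>1] lift_max_biclique[OF q\<^sub>2]])
  moreover have "\<rho> (lift q) = q" if "q \<in> del.\<B>" for q
    using \<rho> lift_max_biclique[OF that] lift_X_shore_ne_v[OF that] proj_lift[OF that] by simp
  moreover have "\<rho> c = q\<^sub>1 \<or> \<rho> c = q\<^sub>2"
    if c: "c \<in> \<B>" "lift q\<^sub>1 \<inter> X \<subseteq> c \<inter> X" "c \<inter> X \<subseteq> lift q\<^sub>2 \<inter> X" for c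
  proof -
    obtain x where "x \<in> q\<^sub>1 \<inter> X" using del_max_biclique_X_nonempty[OF q\<^sub>1] by blast
    then have c_ne: "c \<inter> X \<noteq> {v}"
      using c lift_X_shore_minus_v[OF q\<^sub>1] v_notin_del_max_biclique[OF q\<^sub>1] by blast
    have pc: "proj c \<in> del.\<B>" using proj_max_biclique[OF c(1) c_ne] .
    have "q\<^sub>1 \<inter> X \<subseteq> proj c \<inter> X" "proj c \<inter> X \<subseteq> q\<^sub>2 \<inter> X"
      unfolding proj_X_shore using c lift_X_shore_minus_v[OF q\<^sub>1] lift_X_shore_minus_v[OF q\<^sub>2] by blast+
    then have "proj c \<inter> X = q\<^sub>1 \<inter> X \<or> proj c \<inter> X = q\<^sub>2 \<inter> X" using no_between pc by blast
    then have "proj c = q\<^sub>1 \<or> proj c = q\<^sub>2"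
      using del_max_biclique_eqI[OF pc q\<^sub>1] del_max_biclique_eqI[OF pc q\<^sub>2] by blast
    with \<rho> c(1) c_ne show ?thesis by simp
  qed
  moreover have "q\<^sub>1 \<noteq> q\<^sub>2" using lt by blast
  ultimately show ?thesis using q\<^sub>1 q\<^sub>2 by (intro trancl_arcs_crossing) auto
qed

section \<open>The contraction and induced subgraph cases\<close>

abbreviation "H \<equiv> Hgraph X Y E"
abbreviation "H_del \<equiv> Hgraph (X - {v}) Y (del_edges E v)"

definition contracted_arcs :: "'a set \<Rightarrow> ('a set \<times> 'a set) set" where
  "contracted_arcs e =
    {(lift (proj c), c) | c. c \<in> \<B> \<and> c \<inter> X \<noteq> {v} \<and> c \<notin> lift ` del.\<B>} \<union>
    {(c, e) | c. c \<in> \<B> \<and> c \<inter> X = {v}}"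

definition retract :: "'a set \<Rightarrow> 'a set \<Rightarrow> 'a set" where
  "retract e c = (if c \<inter> X = {v} then proj e else proj c)"

context
  fixes e :: "'a set"
  assumes star_cover: "\<And>c. c \<in> \<B> \<Longrightarrow> c \<inter> X = {v} \<Longrightarrow> (c, e) \<in> arcs"
    and star_cover_unique: "\<And>c e'. c \<in> \<B> \<Longrightarrow> c \<inter> X = {v} \<Longrightarrow> (c, e') \<in> arcs \<Longrightarrow> e' = e"
begin

lemma cover_of_star:
  assumes "c \<in> \<B>" "c \<inter> X = {v}"
  shows "e \<in> \<B>" "e \<inter> X \<noteq> {v}"
  using arcs_max_biclique[OF star_cover[OF assms]] arcs_X_psubset[OF star_cover[OF assms]] assms(2)
  by auto

lemma contracted_arcs_subset: "contracted_arcs e \<subseteq> arcs"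
  unfolding contracted_arcs_def using unlifted_max_biclique(3) star_cover by blast

lemma retract_max_biclique: "c \<in> \<B> \<Longrightarrow> retract e c \<in> del.\<B>"
  unfolding retract_def using proj_max_biclique cover_of_star by auto

lemma retract_lift: "q \<in> del.\<B> \<Longrightarrow> retract e (lift q) = q"
  unfolding retract_def using lift_X_shore_ne_v proj_lift by simp

lemma retract_contracted_arc:
  assumes "(a, b) \<in> contracted_arcs e"
  shows "retract e a = retract e b"
  using assms unfolding contracted_arcs_def
proof (elim UnE CollectE exE conjE)
  fix c assume "(a, b) = (lift (proj c), c)" "c \<in> \<B>" "c \<inter> X \<noteq> {v}"
  then show ?thesis using retract_lift proj_max_biclique retract_def by auto
next
  fix c assume "(a, b) = (c, e)" "c \<in> \<B>" "c \<inter> X = {v}"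
  then show ?thesis using cover_of_star retract_def by auto
qed

lemma lift_retract_conn_rel:
  assumes c: "c \<in> \<B>"
  shows "(lift (retract e c), c) \<in> conn_rel \<B> (contracted_arcs e)"
proof -
  have non_star: "(lift (proj p), p) \<in> conn_rel \<B> (contracted_arcs e)"
    if p: "p \<in> \<B>" "p \<inter> X \<noteq> {v}" for p
  proof (cases "p \<in> lift ` del.\<B>")
    case True
    then show ?thesis using p(1) proj_lift conn_rel_refl by auto
  next
    case False
    with p have "(lift (proj p), p) \<in> contracted_arcs e" unfolding contracted_arcs_def by blast
    with p show ?thesis
      using lift_max_biclique[OF proj_max_biclique[OF p]] by (blast intro: conn_relI)
  qed
  show ?thesis
  proof (cases "c \<inter> X = {v}")
    case True
    with c have "(c, e) \<in> contracted_arcs e" unfolding contracted_arcs_def by blast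
    with c True have "(e, c) \<in> conn_rel \<B> (contracted_arcs e)"
      using cover_of_star by (blast intro: conn_relI_converse)
    moreover have "(lift (proj e), e) \<in> conn_rel \<B> (contracted_arcs e)"
      using non_star cover_of_star c True by blast
    ultimately show ?thesis using True unfolding retract_def by (auto intro: conn_rel_trans)
  next
    case False
    with non_star c show ?thesis unfolding retract_def by simp
  qed
qed

lemma del_arcs_iff_retract:
  assumes DH: "distance_hereditary (X \<union> Y) E" and q: "q\<^sub>1 \<in> del.\<B>" "q\<^sub>2 \<in> del.\<B>"
  shows "(q\<^sub>1, q\<^sub>2) \<in> del.arcs \<longleftrightarrow>
    q\<^sub>1 \<noteq> q\<^sub>2 \<and> (\<exists>a\<in>\<B>. \<exists>b\<in>\<B>. retract e a = q\<^sub>1 \<and> retract e b = q\<^sub>2 \<and> (a, b) \<in> arcs)"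
proof
  assume arc: "(q\<^sub>1, q\<^sub>2) \<in> del.arcs"
  have "\<forall>c\<in>\<B>. c \<inter> X \<noteq> {v} \<longrightarrow> retract e c = proj c" unfolding retract_def by simp
  from del_arc_imp_arc[OF arc this] obtain a b where "(a, b) \<in> arcs" "retract e a = q\<^sub>1" "retract e b = q\<^sub>2"
    by blast
  moreover have "q\<^sub>1 \<noteq> q\<^sub>2" using arc unfolding del_arcs_iff by blast
  ultimately show "q\<^sub>1 \<noteq> q\<^sub>2 \<and> (\<exists>a\<in>\<B>. \<exists>b\<in>\<B>. retract e a = q\<^sub>1 \<and> retract e b = q\<^sub>2 \<and> (a, b) \<in> arcs)"
    using arcs_max_biclique by blast
next
  assume "q\<^sub>1 \<noteq> q\<^sub>2 \<and> (\<exists>a\<in>\<B>. \<exists>b\<in>\<B>. retract e a = q\<^sub>1 \<and> retract e b = q\<^sub>2 \<and> (a, b) \<in> arcs)"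
  then obtain a b where ab: "a \<in> \<B>" "b \<in> \<B>" "(a, b) \<in> arcs"
    and retr: "retract e a = q\<^sub>1" "retract e b = q\<^sub>2" "q\<^sub>1 \<noteq> q\<^sub>2"
    by blast
  have a_ne: "a \<inter> X \<noteq> {v}"
  proof
    assume "a \<inter> X = {v}"
    with ab have "b = e" using star_cover_unique by blast
    with \<open>a \<inter> X = {v}\<close> ab(1) retr show False
      using cover_of_star unfolding retract_def by auto
  qed
  have "b \<inter> X \<noteq> {v}" using ab(3) by (rule arcs_target_X_not_singleton)
  with a_ne retr have "q\<^sub>1 = proj a" "q\<^sub>2 = proj b" unfolding retract_def by simp_all
  with proj_arc[OF DH ab(3) a_ne] retr(3) show "(q\<^sub>1, q\<^sub>2) \<in> del.arcs" by simp
qed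

lemma iso_contraction_H_del:
  assumes DH: "distance_hereditary (X \<union> Y) E"
  shows "iso_contraction H_del H"
proof (rule iso_contractionI[where \<rho> = "retract e" and s = lift and F = "contracted_arcs e"])
  show "contracted_arcs e \<subseteq> snd H" by (rule contracted_arcs_subset)
  show "\<forall>p\<in>fst H. retract e p \<in> fst H_del"
    unfolding fst_Hgraph using retract_max_biclique by blast
  show "\<forall>q\<in>fst H_del. lift q \<in> fst H \<and> retract e (lift q) = q"
    unfolding fst_Hgraph using lift_max_biclique retract_lift by blast
  show "\<forall>(a, b)\<in>contracted_arcs e. retract e a = retract e b"
    using retract_contracted_arc by blast
  show "\<forall>p\<in>fst H. (lift (retract e p), p) \<in> conn_rel (fst H) (contracted_arcs e)"
    unfolding fst_Hgraph using lift_retract_conn_rel by blast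
  show "\<forall>q\<^sub>1\<in>fst H_del. \<forall>q\<^sub>2\<in>fst H_del. (q\<^sub>1, q\<^sub>2) \<in> snd H_del \<longleftrightarrow> q\<^sub>1 \<noteq> q\<^sub>2 \<and>
      (\<exists>a\<in>fst H. \<exists>b\<in>fst H. retract e a = q\<^sub>1 \<and> retract e b = q\<^sub>2 \<and> (a, b) \<in> snd H)"
    unfolding fst_Hgraph using del_arcs_iff_retract[OF DH] by blast
qed

end

lemma lift_arcs_iff:
  assumes all_lifted: "\<And>c. c \<in> \<B> \<Longrightarrow> c \<inter> X \<noteq> {v} \<Longrightarrow> c \<in> lift ` del.\<B>"
    and q: "q\<^sub>1 \<in> del.\<B>" "q\<^sub>2 \<in> del.\<B>"
  shows "(lift q\<^sub>1, lift q\<^sub>2) \<in> arcs \<longleftrightarrow> (q\<^sub>1, q\<^sub>2) \<in> del.arcs"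
proof -
  have between: "(\<exists>C\<in>\<B>. lift q\<^sub>1 \<inter> X \<subset> C \<inter> X \<and> C \<inter> X \<subset> lift q\<^sub>2 \<inter> X) \<longleftrightarrow>
      (\<exists>c\<in>del.\<B>. q\<^sub>1 \<inter> X \<subset> c \<inter> X \<and> c \<inter> X \<subset> q\<^sub>2 \<inter> X)"
  proof
    assume "\<exists>C\<in>\<B>. lift q\<^sub>1 \<inter> X \<subset> C \<inter> X \<and> C \<inter> X \<subset> lift q\<^sub>2 \<inter> X"
    then obtain C where C: "C \<in> \<B>" "lift q\<^sub>1 \<inter> X \<subset> C \<inter> X" "C \<inter> X \<subset> lift q\<^sub>2 \<inter> X" by blast
    obtain x where "x \<in> q\<^sub>1 \<inter> X" using del_max_biclique_X_nonempty[OF q(1)] by blast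
    then have "C \<inter> X \<noteq> {v}"
      using C(2) lift_X_shore_minus_v[OF q(1)] v_notin_del_max_biclique[OF q(1)] by blast
    with all_lifted C(1) obtain c where c: "c \<in> del.\<B>" "C = lift c" by blast
    with C have "q\<^sub>1 \<inter> X \<subset> c \<inter> X" "c \<inter> X \<subset> q\<^sub>2 \<inter> X"
      using lift_X_psubset_iff[OF q(1) c(1)] lift_X_psubset_iff[OF c(1) q(2)] by simp_all
    with c(1) show "\<exists>c\<in>del.\<B>. q\<^sub>1 \<inter> X \<subset> c \<inter> X \<and> c \<inter> X \<subset> q\<^sub>2 \<inter> X" by blast
  next
    assume "\<exists>c\<in>del.\<B>. q\<^sub>1 \<inter> X \<subset> c \<inter> X \<and> c \<inter> X \<subset> q\<^sub>2 \<inter> X"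
    then obtain c where c: "c \<in> del.\<B>" "q\<^sub>1 \<inter> X \<subset> c \<inter> X" "c \<inter> X \<subset> q\<^sub>2 \<inter> X" by blast
    then have "lift q\<^sub>1 \<inter> X \<subset> lift c \<inter> X" "lift c \<inter> X \<subset> lift q\<^sub>2 \<inter> X"
      using lift_X_psubset_iff[OF q(1) c(1)] lift_X_psubset_iff[OF c(1) q(2)] by simp_all
    with lift_max_biclique[OF c(1)]
    show "\<exists>C\<in>\<B>. lift q\<^sub>1 \<inter> X \<subset> C \<inter> X \<and> C \<inter> X \<subset> lift q\<^sub>2 \<inter> X" by blast
  qed
  show ?thesis
    unfolding arcs_iff del_arcs_iff between
    using q lift_max_biclique[OF q(1)] lift_max_biclique[OF q(2)] lift_X_psubset_iff[OF q] by blast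
qed

lemma iso_induced_subgraph_H_del:
  assumes c\<^sub>0: "c\<^sub>0 \<in> \<B>" "c\<^sub>0 \<inter> X = {v}" and no_cover: "\<And>e. (c\<^sub>0, e) \<notin> arcs"
  shows "iso_induced_subgraph H_del H"
proof -
  have "c \<in> lift ` del.\<B>" if c: "c \<in> \<B>" "c \<inter> X \<noteq> {v}" for c
  proof (rule ccontr)
    assume "c \<notin> lift ` del.\<B>"
    with c have "v \<in> c" using unlifted_max_biclique(1) by blast
    with c(2) v_X have "c\<^sub>0 \<inter> X \<subset> c \<inter> X" unfolding c\<^sub>0(2) by auto
    then have "(c\<^sub>0, c) \<in> arcs\<^sup>+" by (rule X_psubset_imp_trancl_arcs[OF c\<^sub>0(1) c(1)])
    with no_cover show False by (metis tranclD)
  qed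
  then show ?thesis
    unfolding iso_induced_subgraph_def fst_Hgraph
    using inj_on_lift lift_max_biclique lift_arcs_iff by blast
qed

section \<open>A star with two covers\<close>

lemma star_cover_contains_v: "c\<^sub>0 \<inter> X = {v} \<Longrightarrow> (c\<^sub>0, e) \<in> arcs \<Longrightarrow> v \<in> e \<inter> X"
  using arcs_X_psubset by blast

lemma star_cover_other_X_vertex:
  assumes "c\<^sub>0 \<inter> X = {v}" "(c\<^sub>0, e) \<in> arcs"
  obtains s where "s \<in> e \<inter> X" "s \<noteq> v"
  using star_cover_contains_v[OF assms] arcs_target_X_not_singleton[OF assms(2)] by blast

lemma star_cover_generated:
  assumes c\<^sub>0: "c\<^sub>0 \<in> \<B>" "c\<^sub>0 \<inter> X = {v}" and ce: "(c\<^sub>0, e) \<in> arcs" and s: "s \<in> e \<inter> X" "s \<noteq> v"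
  shows "e \<inter> X = N\<^sub>X (N\<^sub>Y {v, s})"
proof -
  have e: "e \<in> \<B>" and no_between: "\<not> (\<exists>C\<in>\<B>. c\<^sub>0 \<inter> X \<subset> C \<inter> X \<and> C \<inter> X \<subset> e \<inter> X)"
    using ce unfolding arcs_iff by blast+
  have vs: "{v, s} \<subseteq> e \<inter> X" using star_cover_contains_v[OF c\<^sub>0(2) ce] s by blast
  then have "e \<inter> Y \<subseteq> N\<^sub>Y {v, s}" using N_Y_antimono max_biclique_Y_shore[OF e] by blast
  then have "N\<^sub>Y {v, s} \<noteq> {}" using max_biclique_Y_nonempty[OF e] by blast
  then have K: "generated_biclique {v, s} \<in> \<B>" "generated_biclique {v, s} \<inter> X = N\<^sub>X (N\<^sub>Y {v, s})"
    "{v, s} \<subseteq> generated_biclique {v, s} \<inter> X"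
    using generated_max_biclique[of "{v, s}"] vs by blast+
  have sub: "N\<^sub>X (N\<^sub>Y {v, s}) \<subseteq> e \<inter> X" by (rule closure_subset_max_biclique[OF e vs])
  have c\<^sub>0_below: "c\<^sub>0 \<inter> X \<subset> generated_biclique {v, s} \<inter> X" using c\<^sub>0(2) K(3) s(2) by blast
  show ?thesis
  proof (rule ccontr)
    assume "e \<inter> X \<noteq> N\<^sub>X (N\<^sub>Y {v, s})"
    with sub K(2) have "generated_biclique {v, s} \<inter> X \<subset> e \<inter> X" by blast
    with no_between K(1) c\<^sub>0_below show False by blast
  qed
qed

lemma star_covers_X_disjoint:
  assumes c\<^sub>0: "c\<^sub>0 \<in> \<B>" "c\<^sub>0 \<inter> X = {v}" and ce: "(c\<^sub>0, e\<^sub>1) \<in> arcs" "(c\<^sub>0, e\<^sub>2) \<in> arcs"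
    and "e\<^sub>1 \<noteq> e\<^sub>2" and t: "t \<in> e\<^sub>2 \<inter> X" "t \<noteq> v"
  shows "t \<notin> e\<^sub>1"
proof
  assume "t \<in> e\<^sub>1"
  have e\<^sub>1: "e\<^sub>1 \<in> \<B>" and no_between: "\<not> (\<exists>C\<in>\<B>. c\<^sub>0 \<inter> X \<subset> C \<inter> X \<and> C \<inter> X \<subset> e\<^sub>1 \<inter> X)"
    using ce(1) unfolding arcs_iff by blast+
  have e\<^sub>2: "e\<^sub>2 \<in> \<B>" and "c\<^sub>0 \<inter> X \<subset> e\<^sub>2 \<inter> X" using ce(2) unfolding arcs_iff by blast+
  moreover have "{v, t} \<subseteq> e\<^sub>1 \<inter> X" using \<open>t \<in> e\<^sub>1\<close> t star_cover_contains_v[OF c\<^sub>0(2) ce(1)] by blast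
  then have "e\<^sub>2 \<inter> X \<subseteq> e\<^sub>1 \<inter> X"
    using star_cover_generated[OF c\<^sub>0 ce(2) t] closure_subset_max_biclique[OF e\<^sub>1] by simp
  moreover have "e\<^sub>2 \<inter> X \<noteq> e\<^sub>1 \<inter> X" using max_biclique_eqI[OF e\<^sub>2 e\<^sub>1] \<open>e\<^sub>1 \<noteq> e\<^sub>2\<close> by blast
  ultimately show False using no_between by blast
qed

text \<open>Two covers of the star would otherwise span a hole or a domino.\<close>
lemma star_covers_Y_disjoint:
  assumes DH: "distance_hereditary (X \<union> Y) E"
    and c\<^sub>0: "c\<^sub>0 \<in> \<B>" "c\<^sub>0 \<inter> X = {v}" and ce: "(c\<^sub>0, e\<^sub>1) \<in> arcs" "(c\<^sub>0, e\<^sub>2) \<in> arcs"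
    and ne: "e\<^sub>1 \<noteq> e\<^sub>2"
  shows "e\<^sub>1 \<inter> e\<^sub>2 \<inter> Y = {}"
proof (rule ccontr)
  assume "e\<^sub>1 \<inter> e\<^sub>2 \<inter> Y \<noteq> {}"
  then obtain y where y: "y \<in> e\<^sub>1 \<inter> Y" "y \<in> e\<^sub>2 \<inter> Y" by blast
  have e\<^sub>1: "e\<^sub>1 \<in> \<B>" and e\<^sub>2: "e\<^sub>2 \<in> \<B>" using ce arcs_max_biclique by blast+
  obtain s where s: "s \<in> e\<^sub>1 \<inter> X" "s \<noteq> v" using star_cover_other_X_vertex[OF c\<^sub>0(2) ce(1)] .
  obtain t where t: "t \<in> e\<^sub>2 \<inter> X" "t \<noteq> v" using star_cover_other_X_vertex[OF c\<^sub>0(2) ce(2)] .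
  have v: "v \<in> e\<^sub>1 \<inter> X" "v \<in> e\<^sub>2 \<inter> X" using star_cover_contains_v c\<^sub>0(2) ce by blast+
  have "t \<notin> e\<^sub>1" by (rule star_covers_X_disjoint[OF c\<^sub>0 ce ne t])
  then obtain w where w: "w \<in> e\<^sub>1 \<inter> Y" "(t, w) \<notin> E" using max_biclique_nonedge[OF e\<^sub>1] t by blast
  have "s \<notin> e\<^sub>2" by (rule star_covers_X_disjoint[OF c\<^sub>0 ce(2,1) ne[symmetric] s])
  then obtain w' where w': "w' \<in> e\<^sub>2 \<inter> Y" "(s, w') \<notin> E" using max_biclique_nonedge[OF e\<^sub>2] s by blast
  have "(s, w) \<in> E" "(v, w) \<in> E" "(v, w') \<in> E" "(t, w') \<in> E" "(s, y) \<in> E" "(t, y) \<in> E"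
    using max_biclique_edge e\<^sub>1 e\<^sub>2 s t v w w' y by blast+
  moreover have XY: "s \<in> X" "t \<in> X" "v \<in> X" "w \<in> Y" "w' \<in> Y" "y \<in> Y"
    using s t v_X w w' y by blast+
  ultimately have "s = t \<or> adj E s t \<or> (\<exists>x\<in>{s, w, v, w', t}. adj E s x \<and> adj E x t)"
    by (intro distance_hereditary_6_cycle[OF DH, of s w v w' t y]) (simp_all add: adj_XY adj_YX)
  moreover have "s \<noteq> t" using \<open>s \<notin> e\<^sub>2\<close> t by blast
  moreover have "\<not> adj E s t" using not_adj_XX XY by blast
  moreover have "\<not> (adj E s x \<and> adj E x t)" if "x \<in> {s, w, v, w', t}" for x
    using that XY w(2) w'(2) not_adj_XX[of s] adj_YX[of t w] adj_XY[of s w'] by auto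
  ultimately show False by blast
qed

lemma star_covers_no_common_nbr:
  assumes DH: "distance_hereditary (X \<union> Y) E"
    and c\<^sub>0: "c\<^sub>0 \<in> \<B>" "c\<^sub>0 \<inter> X = {v}" and ce: "(c\<^sub>0, e\<^sub>1) \<in> arcs" "(c\<^sub>0, e\<^sub>2) \<in> arcs"
    and ne: "e\<^sub>1 \<noteq> e\<^sub>2" and y: "y\<^sub>1 \<in> e\<^sub>1 \<inter> Y" "y\<^sub>2 \<in> e\<^sub>2 \<inter> Y"
    and x: "x \<in> X" "x \<noteq> v" "(x, y\<^sub>1) \<in> E" "(x, y\<^sub>2) \<in> E"
  shows False
proof -
  have "(v, y\<^sub>1) \<in> E" "(v, y\<^sub>2) \<in> E"
    using max_biclique_edge arcs_max_biclique ce y star_cover_contains_v[OF c\<^sub>0(2)] by blast+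
  with x y have "y\<^sub>1 \<in> N\<^sub>Y {v, x}" "y\<^sub>2 \<in> N\<^sub>Y {v, x}" unfolding common_right_nbrs_def by auto
  moreover have "{v, x} \<subseteq> X" using x v_X by blast
  ultimately have K: "generated_biclique {v, x} \<in> \<B>" "{v, x} \<subseteq> generated_biclique {v, x} \<inter> X"
    "generated_biclique {v, x} \<inter> Y = N\<^sub>Y {v, x}"
    using generated_max_biclique[of "{v, x}"] by blast+
  have "c\<^sub>0 \<inter> X \<subset> generated_biclique {v, x} \<inter> X" using c\<^sub>0(2) K(2) x(2) by blast
  then have "(c\<^sub>0, generated_biclique {v, x}) \<in> arcs\<^sup>+"
    by (rule X_psubset_imp_trancl_arcs[OF c\<^sub>0(1) K(1)])
  then obtain e where ce': "(c\<^sub>0, e) \<in> arcs" and "(e, generated_biclique {v, x}) \<in> arcs\<^sup>*"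
    by (metis tranclD)
  then have "e \<inter> X \<subseteq> generated_biclique {v, x} \<inter> X"
    by (metis order_refl psubset_imp_subset rtranclD trancl_arcs_X_psubset)
  then have "N\<^sub>Y {v, x} \<subseteq> e \<inter> Y"
    using max_biclique_X_subset_iff[OF _ K(1)] arcs_max_biclique[OF ce'] K(3) by blast
  with \<open>y\<^sub>1 \<in> N\<^sub>Y {v, x}\<close> \<open>y\<^sub>2 \<in> N\<^sub>Y {v, x}\<close> y
  have "e \<inter> e\<^sub>1 \<inter> Y \<noteq> {}" "e \<inter> e\<^sub>2 \<inter> Y \<noteq> {}" by blast+
  then have "e = e\<^sub>1" "e = e\<^sub>2"
    using star_covers_Y_disjoint[OF DH c\<^sub>0 ce'] ce by blast+
  with ne show False by simp
qed

abbreviation "adj_del \<equiv> adj_in E (X \<union> Y - {v})"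

lemma star_covers_separated:
  assumes DH: "distance_hereditary (X \<union> Y) E"
    and c\<^sub>0: "c\<^sub>0 \<in> \<B>" "c\<^sub>0 \<inter> X = {v}" and ce: "(c\<^sub>0, e\<^sub>1) \<in> arcs" "(c\<^sub>0, e\<^sub>2) \<in> arcs"
    and ne: "e\<^sub>1 \<noteq> e\<^sub>2" and y: "y\<^sub>1 \<in> e\<^sub>1 \<inter> Y" "y\<^sub>2 \<in> e\<^sub>2 \<inter> Y"
  shows "(y\<^sub>1, y\<^sub>2) \<notin> adj_del\<^sup>*"
proof
  assume path: "(y\<^sub>1, y\<^sub>2) \<in> adj_del\<^sup>*"
  have "(v, y\<^sub>1) \<in> E" "(v, y\<^sub>2) \<in> E"
    using max_biclique_edge arcs_max_biclique ce y star_cover_contains_v[OF c\<^sub>0(2)] by blast+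
  then have "y\<^sub>1 = y\<^sub>2 \<or> adj E y\<^sub>1 y\<^sub>2 \<or> (\<exists>x\<in>X \<union> Y - {v}. adj E y\<^sub>1 x \<and> adj E x y\<^sub>2)"
    using y v_X v_notin_Y
    by (intro distance_hereditary_component_dist_2[OF DH _ _ path, of v]) (auto simp: adj_XY adj_YX)
  moreover have "y\<^sub>1 \<noteq> y\<^sub>2" using star_covers_Y_disjoint[OF DH c\<^sub>0 ce ne] y by blast
  moreover have "\<not> adj E y\<^sub>1 y\<^sub>2" using not_adj_YY y by blast
  moreover have "\<not> (adj E y\<^sub>1 x \<and> adj E x y\<^sub>2)" if x: "x \<in> X \<union> Y - {v}" for x
  proof
    assume adj: "adj E y\<^sub>1 x \<and> adj E x y\<^sub>2"
    then have "x \<in> X" using x not_adj_YY y by blast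
    with adj have "(x, y\<^sub>1) \<in> E" "(x, y\<^sub>2) \<in> E" using adj_XY adj_YX by blast+
    with \<open>x \<in> X\<close> x show False by (intro star_covers_no_common_nbr[OF DH c\<^sub>0 ce ne y]) auto
  qed
  ultimately show False by blast
qed

lemma del_max_biclique_Y_reachable:
  assumes q: "q \<in> del.\<B>" "q' \<in> del.\<B>" and x: "x \<in> q \<inter> X" "x \<in> q' \<inter> X"
    and y: "y \<in> q \<inter> Y" "y' \<in> q' \<inter> Y"
  shows "(y, y') \<in> adj_del\<^sup>*"
proof -
  have "(x, y) \<in> E" "(x, y') \<in> E" using del_max_biclique_edge q x y by blast+
  moreover have "x \<noteq> v" using v_notin_del_max_biclique[OF q(1)] x(1) by blast
  ultimately have "(y, x) \<in> adj_del" "(x, y') \<in> adj_del"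
    unfolding adj_in_def using x y v_notin_Y adj_XY adj_YX by auto
  then show ?thesis by (meson r_into_rtrancl rtrancl_into_rtrancl)
qed

text \<open>The set of vertices reachable from the \<open>Y\<close>-shore is constant along arcs.\<close>
lemma del_conn_rel_imp_Y_reachable:
  assumes qq': "(q, q') \<in> conn_rel del.\<B> del.arcs" and y: "y \<in> q \<inter> Y" "y' \<in> q' \<inter> Y"
  shows "(y, y') \<in> adj_del\<^sup>*"
proof -
  define reach where "reach q = {w. \<exists>y\<in>q \<inter> Y. (y, w) \<in> adj_del\<^sup>*}" for q
  have reach_mono: "reach a \<subseteq> reach b"
    if ab: "a \<in> del.\<B>" "b \<in> del.\<B>" "x \<in> a \<inter> X" "x \<in> b \<inter> X"
    for a b x
  proof
    fix w assume "w \<in> reach a"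
    then obtain y where "y \<in> a \<inter> Y" "(y, w) \<in> adj_del\<^sup>*" unfolding reach_def by blast
    moreover obtain y\<^sub>b where "y\<^sub>b \<in> b \<inter> Y" using del.max_biclique_Y_nonempty[OF ab(2)] by blast
    ultimately show "w \<in> reach b"
      unfolding reach_def using del_max_biclique_Y_reachable[OF ab(2,1,4,3)]
      by (blast intro: rtrancl_trans)
  qed
  have "reach q = reach q'" using qq'
  proof (rule conn_rel_invariant)
    fix a b assume ab: "(a, b) \<in> del.arcs" "a \<in> del.\<B>" "b \<in> del.\<B>"
    obtain x where "x \<in> a \<inter> X" using del_max_biclique_X_nonempty[OF ab(2)] by blast
    moreover have "a \<inter> X \<subseteq> b \<inter> X" using ab(1) unfolding del_arcs_iff by blast
    ultimately show "reach a = reach b" using reach_mono ab(2,3) by blast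
  qed
  moreover have "y' \<in> reach q'" using y(2) unfolding reach_def by blast
  ultimately obtain y\<^sub>0 where y\<^sub>0: "y\<^sub>0 \<in> q \<inter> Y" "(y\<^sub>0, y') \<in> adj_del\<^sup>*" unfolding reach_def by blast
  have q: "q \<in> del.\<B>" using qq' conn_rel_subset by blast
  obtain x where "x \<in> q \<inter> X" using del_max_biclique_X_nonempty[OF q] by blast
  with q y(1) y\<^sub>0 show ?thesis by (blast intro: del_max_biclique_Y_reachable rtrancl_trans)
qed

lemma lift_conn_rel:
  assumes "(q, q') \<in> conn_rel del.\<B> del.arcs"
  shows "(lift q, lift q') \<in> conn_rel \<B> arcs"
proof -
  let ?R = "conn_rel \<B> arcs"
  have q: "q \<in> del.\<B>" "q' \<in> del.\<B>" using assms conn_rel_subset by blast+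
  have "?R `` {lift q} = ?R `` {lift q'}" using assms
  proof (rule conn_rel_invariant)
    fix a b assume ab: "(a, b) \<in> del.arcs" "a \<in> del.\<B>" "b \<in> del.\<B>"
    then have "lift a \<inter> X \<subseteq> lift b \<inter> X" using lift_X_subset_iff del_arcs_iff by blast
    then have "(lift a, lift b) \<in> ?R"
      using X_subset_imp_conn_rel lift_max_biclique ab(2,3) by blast
    then show "?R `` {lift a} = ?R `` {lift b}" by (rule equiv_class_eq[OF conn_rel_equiv])
  qed
  then show ?thesis
    using eq_equiv_class_iff[OF conn_rel_equiv lift_max_biclique[OF q(1)] lift_max_biclique[OF q(2)]]
    by simp
qed

lemma lift_proj_conn_rel:
  assumes "p \<in> \<B>" "p \<inter> X \<noteq> {v}"
  shows "(lift (proj p), p) \<in> conn_rel \<B> arcs"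
  using X_subset_imp_conn_rel lift_max_biclique proj_max_biclique lift_proj_X_shore(2) assms
  by blast

lemma proj_star_covers_not_conn_rel:
  assumes DH: "distance_hereditary (X \<union> Y) E"
    and c\<^sub>0: "c\<^sub>0 \<in> \<B>" "c\<^sub>0 \<inter> X = {v}" and ce: "(c\<^sub>0, e\<^sub>1) \<in> arcs" "(c\<^sub>0, e\<^sub>2) \<in> arcs"
    and ne: "e\<^sub>1 \<noteq> e\<^sub>2"
  shows "(proj e\<^sub>1, proj e\<^sub>2) \<notin> conn_rel del.\<B> del.arcs"
proof
  assume conn: "(proj e\<^sub>1, proj e\<^sub>2) \<in> conn_rel del.\<B> del.arcs"
  have e: "e\<^sub>1 \<in> \<B>" "e\<^sub>2 \<in> \<B>" using ce arcs_max_biclique by blast+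
  obtain y\<^sub>1 y\<^sub>2 where y: "y\<^sub>1 \<in> e\<^sub>1 \<inter> Y" "y\<^sub>2 \<in> e\<^sub>2 \<inter> Y"
    using max_biclique_Y_nonempty e by blast
  then have "y\<^sub>1 \<in> proj e\<^sub>1 \<inter> Y" "y\<^sub>2 \<in> proj e\<^sub>2 \<inter> Y" using Y_shore_subset_proj e by blast+
  with conn have "(y\<^sub>1, y\<^sub>2) \<in> adj_del\<^sup>*" by (rule del_conn_rel_imp_Y_reachable)
  with star_covers_separated[OF DH c\<^sub>0 ce ne y] show False by simp
qed

lemma more_components_H_del:
  assumes DH: "distance_hereditary (X \<union> Y) E"
    and c\<^sub>0: "c\<^sub>0 \<in> \<B>" "c\<^sub>0 \<inter> X = {v}" and ce: "(c\<^sub>0, e\<^sub>1) \<in> arcs" "(c\<^sub>0, e\<^sub>2) \<in> arcs"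
    and ne: "e\<^sub>1 \<noteq> e\<^sub>2"
  shows "num_components H_del > num_components H"
proof -
  let ?R = "conn_rel \<B> arcs" and ?R' = "conn_rel del.\<B> del.arcs"
  have e: "e\<^sub>1 \<in> \<B>" "e\<^sub>1 \<inter> X \<noteq> {v}" "e\<^sub>2 \<in> \<B>" "e\<^sub>2 \<inter> X \<noteq> {v}"
    using ce arcs_max_biclique arcs_target_X_not_singleton by blast+
  have star_e: "(c\<^sub>0, e\<^sub>1) \<in> ?R" "(c\<^sub>0, e\<^sub>2) \<in> ?R"
    using ce arcs_subset by (blast intro: conn_relI)+
  have lift_e: "(lift (proj e\<^sub>1), c\<^sub>0) \<in> ?R" "(lift (proj e\<^sub>2), c\<^sub>0) \<in> ?R"
    using lift_proj_conn_rel e star_e by (blast intro: conn_rel_trans conn_rel_sym)+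
  have "card (\<B> // ?R) < card (del.\<B> // ?R')"
  proof (rule card_quotient_less[OF del.finite_max_bicliques conn_rel_equiv conn_rel_equiv])
    show "\<forall>q\<in>del.\<B>. lift q \<in> \<B>" using lift_max_biclique by blast
    show "\<forall>q q'. (q, q') \<in> ?R' \<longrightarrow> (lift q, lift q') \<in> ?R" using lift_conn_rel by blast
    show "\<forall>p\<in>\<B>. \<exists>q\<in>del.\<B>. (lift q, p) \<in> ?R"
    proof
      fix p assume p: "p \<in> \<B>"
      show "\<exists>q\<in>del.\<B>. (lift q, p) \<in> ?R"
      proof (cases "p \<inter> X = {v}")
        case True
        then have "p = c\<^sub>0" using max_biclique_eqI[OF p c\<^sub>0(1)] c\<^sub>0(2) by simp
        with lift_e proj_max_biclique e show ?thesis by blast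
      next
        case False
        with p lift_proj_conn_rel proj_max_biclique show ?thesis by blast
      qed
    qed
    show "proj e\<^sub>1 \<in> del.\<B>" "proj e\<^sub>2 \<in> del.\<B>" using proj_max_biclique e by blast+
    show "(lift (proj e\<^sub>1), lift (proj e\<^sub>2)) \<in> ?R"
      using lift_e by (blast intro: conn_rel_trans conn_rel_sym)
    show "(proj e\<^sub>1, proj e\<^sub>2) \<notin> ?R'" by (rule proj_star_covers_not_conn_rel[OF DH c\<^sub>0 ce ne])
  qed
  then show ?thesis unfolding num_components_def fst_Hgraph by simp
qed

lemma H_del_trichotomy:
  assumes DH: "distance_hereditary (X \<union> Y) E"
  shows "num_components H_del > num_components H \<or> iso_induced_subgraph H_del H \<or>
    iso_contraction H_del H"
proof (cases "\<exists>c\<^sub>0\<in>\<B>. c\<^sub>0 \<inter> X = {v}")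
  case True
  then obtain c\<^sub>0 where c\<^sub>0: "c\<^sub>0 \<in> \<B>" "c\<^sub>0 \<inter> X = {v}" by blast
  have star_unique: "c = c\<^sub>0" if "c \<in> \<B>" "c \<inter> X = {v}" for c
    using max_biclique_eqI[OF that(1) c\<^sub>0(1)] that(2) c\<^sub>0(2) by simp
  consider "\<And>e. (c\<^sub>0, e) \<notin> arcs" | e where "(c\<^sub>0, e) \<in> arcs" "\<And>e'. (c\<^sub>0, e') \<in> arcs \<Longrightarrow> e' = e"
    | e\<^sub>1 e\<^sub>2 where "(c\<^sub>0, e\<^sub>1) \<in> arcs" "(c\<^sub>0, e\<^sub>2) \<in> arcs" "e\<^sub>1 \<noteq> e\<^sub>2"
    by blast
  then show ?thesis
  proof cases
    case 1
    then show ?thesis using iso_induced_subgraph_H_del[OF c\<^sub>0] by blast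
  next
    case (2 e)
    then have "iso_contraction H_del H" using star_unique by (intro iso_contraction_H_del[OF _ _ DH]) auto
    then show ?thesis by blast
  next
    case 3
    then show ?thesis using more_components_H_del[OF DH c\<^sub>0] by blast
  qed
next
  case False
  \<comment> \<open>without a star the hypotheses on the cover \<open>e\<close> are vacuous, so any \<open>e\<close> will do\<close>
  then have "iso_contraction H_del H" by (intro iso_contraction_H_del[OF _ _ DH]) auto
  then show ?thesis by blast
qed

end

section \<open>Swapping the colour classes\<close>

definition converse_digraph :: "'b digraph \<Rightarrow> 'b digraph" where
  "converse_digraph H = (fst H, (snd H)\<inverse>)"

lemma conn_rel_converse: "conn_rel V (F\<inverse>) = conn_rel V F"
proof -
  have "(F\<inverse> \<inter> V \<times> V) \<union> (F\<inverse> \<inter> V \<times> V)\<inverse> = (F \<inter> V \<times> V) \<union> (F \<inter> V \<times> V)\<inverse>" by auto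
  then show ?thesis unfolding conn_rel_def by simp
qed

lemma converse_digraph_converse_digraph [simp]: "converse_digraph (converse_digraph H) = H"
  by (simp add: converse_digraph_def)

lemma num_components_converse: "num_components (converse_digraph H) = num_components H"
  unfolding num_components_def converse_digraph_def by (simp add: conn_rel_converse)

lemma iso_induced_subgraph_converse:
  "iso_induced_subgraph H\<^sub>1 H\<^sub>2 \<Longrightarrow> iso_induced_subgraph (converse_digraph H\<^sub>1) (converse_digraph H\<^sub>2)"
  unfolding iso_induced_subgraph_def converse_digraph_def by auto

lemma iso_contraction_converse:
  assumes "iso_contraction H\<^sub>1 H\<^sub>2"
  shows "iso_contraction (converse_digraph H\<^sub>1) (converse_digraph H\<^sub>2)"
proof -
  obtain F where F: "F \<subseteq> snd H\<^sub>2" "digraph_iso H\<^sub>1 (contract H\<^sub>2 F)"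
    using assms unfolding iso_contraction_def by blast
  have "contract (converse_digraph H\<^sub>2) (F\<inverse>) = converse_digraph (contract H\<^sub>2 F)"
    unfolding contract_def converse_digraph_def Let_def conn_rel_converse by auto
  moreover have "digraph_iso (converse_digraph H\<^sub>1) (converse_digraph (contract H\<^sub>2 F))"
    using F(2) unfolding digraph_iso_def converse_digraph_def by auto
  moreover have "F\<inverse> \<subseteq> snd (converse_digraph H\<^sub>2)" using F(1) unfolding converse_digraph_def by auto
  ultimately show ?thesis unfolding iso_contraction_def by metis
qed

lemma trichotomy_converse_digraph:
  assumes "num_components (converse_digraph H\<^sub>1) > num_components (converse_digraph H\<^sub>2)
    \<or> iso_induced_subgraph (converse_digraph H\<^sub>1) (converse_digraph H\<^sub>2)
    \<or> iso_contraction (converse_digraph H\<^sub>1) (converse_digraph H\<^sub>2)"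
  shows "num_components H\<^sub>1 > num_components H\<^sub>2 \<or> iso_induced_subgraph H\<^sub>1 H\<^sub>2 \<or> iso_contraction H\<^sub>1 H\<^sub>2"
  using assms num_components_converse[of H\<^sub>1] num_components_converse[of H\<^sub>2]
    iso_induced_subgraph_converse[of "converse_digraph H\<^sub>1" "converse_digraph H\<^sub>2"]
    iso_contraction_converse[of "converse_digraph H\<^sub>1" "converse_digraph H\<^sub>2"]
  unfolding converse_digraph_converse_digraph by metis

lemma del_edges_converse: "del_edges (E\<inverse>) v = (del_edges E v)\<inverse>"
  unfolding del_edges_def by auto

lemma distance_hereditary_converse: "distance_hereditary V (E\<inverse>) = distance_hereditary V E"
proof -
  have "adj (E\<inverse>) = adj E" unfolding adj_def by (intro ext) auto
  then have "is_walk_in (E\<inverse>) = is_walk_in E" unfolding is_walk_in_def by simp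
  then show ?thesis unfolding distance_hereditary_def connected_in_def gdist_def by simp
qed

lemma max_bicliques_converse: "max_bicliques Y X (E\<inverse>) = max_bicliques X Y E"
proof -
  have "biclique Y X (E\<inverse>) = biclique X Y E" unfolding biclique_def by (intro ext) blast
  then show ?thesis unfolding max_bicliques_def by simp
qed

lemma Hgraph_converse:
  assumes "bipartite_graph X Y E"
  shows "Hgraph Y X (E\<inverse>) = converse_digraph (Hgraph X Y E)"
proof -
  interpret bip_graph X Y E by (rule bip_graph.intro[OF assms])
  have "bc_less Y B B' \<longleftrightarrow> bc_less X B' B" if "B \<in> \<B>" "B' \<in> \<B>" for B B'
    unfolding bc_less_def bc_le_def using max_biclique_X_psubset_iff[OF that(2,1)] by blast
  then have "(B, B') \<in> snd (Hgraph Y X (E\<inverse>)) \<longleftrightarrow> (B', B) \<in> arcs" for B B'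
    unfolding Hgraph_def max_bicliques_converse by auto
  then show ?thesis
    unfolding converse_digraph_def fst_Hgraph[symmetric] max_bicliques_converse[symmetric]
    by (simp add: prod_eq_iff fst_Hgraph max_bicliques_converse) auto
qed

lemma H_del_trichotomy_X:
  assumes "bipartite_graph X Y E" "distance_hereditary (X \<union> Y) E" "v \<in> X"
  shows "num_components (Hgraph (X - {v}) (Y - {v}) (del_edges E v)) > num_components (Hgraph X Y E)
       \<or> iso_induced_subgraph (Hgraph (X - {v}) (Y - {v}) (del_edges E v)) (Hgraph X Y E)
       \<or> iso_contraction (Hgraph (X - {v}) (Y - {v}) (del_edges E v)) (Hgraph X Y E)"
proof -
  interpret vertex_deletion X Y E v
    using assms by (simp add: vertex_deletion_def vertex_deletion_axioms_def bip_graph_def)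
  have "Y - {v} = Y" using v_notin_Y by blast
  with H_del_trichotomy[OF assms(2)] show ?thesis by simp
qed

lemma H_del_trichotomy_Y:
  assumes bip: "bipartite_graph X Y E" and DH: "distance_hereditary (X \<union> Y) E" and "v \<in> Y"
  shows "num_components (Hgraph (X - {v}) (Y - {v}) (del_edges E v)) > num_components (Hgraph X Y E)
       \<or> iso_induced_subgraph (Hgraph (X - {v}) (Y - {v}) (del_edges E v)) (Hgraph X Y E)
       \<or> iso_contraction (Hgraph (X - {v}) (Y - {v}) (del_edges E v)) (Hgraph X Y E)"
proof (rule trichotomy_converse_digraph)
  have "X - {v} = X" using bip \<open>v \<in> Y\<close> unfolding bipartite_graph_def by auto
  have swapped: "bipartite_graph Y X (E\<inverse>)" "distance_hereditary (Y \<union> X) (E\<inverse>)"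
    using bip DH distance_hereditary_converse unfolding bipartite_graph_def by (auto simp: Un_commute)
  have "bipartite_graph X (Y - {v}) (del_edges E v)"
    using bip unfolding bipartite_graph_def del_edges_def by auto
  then have "Hgraph (Y - {v}) (X - {v}) (del_edges (E\<inverse>) v) =
      converse_digraph (Hgraph (X - {v}) (Y - {v}) (del_edges E v))"
    unfolding del_edges_converse \<open>X - {v} = X\<close> by (rule Hgraph_converse)
  with H_del_trichotomy_X[OF swapped \<open>v \<in> Y\<close>] Hgraph_converse[OF bip]
  show "num_components (converse_digraph (Hgraph (X - {v}) (Y - {v}) (del_edges E v)))
        > num_components (converse_digraph (Hgraph X Y E))
      \<or> iso_induced_subgraph (converse_digraph (Hgraph (X - {v}) (Y - {v}) (del_edges E v)))
        (converse_digraph (Hgraph X Y E))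
      \<or> iso_contraction (converse_digraph (Hgraph (X - {v}) (Y - {v}) (del_edges E v)))
        (converse_digraph (Hgraph X Y E))"
    by simp
qed

theorem theorem4:
  fixes X Y :: "'a set" and E :: "('a \<times> 'a) set" and v :: 'a
  assumes "BDH X Y E"
    and "\<not> has_universal_vertex X Y E"
    and "v \<in> X \<union> Y"
  shows "num_components (Hgraph (X - {v}) (Y - {v}) (del_edges E v)) > num_components (Hgraph X Y E)
       \<or> iso_induced_subgraph (Hgraph (X - {v}) (Y - {v}) (del_edges E v)) (Hgraph X Y E)
       \<or> iso_contraction (Hgraph (X - {v}) (Y - {v}) (del_edges E v)) (Hgraph X Y E)"
proof -
  have bip: "bipartite_graph X Y E" and DH: "distance_hereditary (X \<union> Y) E"
    using assms(1) unfolding BDH_def by auto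
  show ?thesis
  proof (cases "v \<in> X")
    case True
    with bip DH show ?thesis by (rule H_del_trichotomy_X)
  next
    case False
    with assms(3) have "v \<in> Y" by blast
    with bip DH show ?thesis by (rule H_del_trichotomy_Y)
  qed
qed

end
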